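(* Let $\mathscr{C}=\{(x,y,z)\in\mathbb{R}^3: x,y,z\ge 0,\ z\le x+y\}$. In generalized non-signalling theory (box world), every vector in $\mathscr{C}$ lies in the closure of the set of bipartite entropy vectors $(\hat H(X),\hat H(Y),\hat H(XY))$, where $X$, $Y$ range over systems of finitely many boxes and the state ranges over all states of the joint system $XY$.
   Context: Box world (GNST): a box has a finite set of inputs and outputs (a box with a single input is called classical). A system of boxes has states given by all collections $p(\mathbf{a}|\mathbf{x})\ge0$ (output tuple $\mathbf{a}$, input tuple $\mathbf{x}$) that are normalized ($\sum_{\mathbf{a}}p(\mathbf{a}|\mathbf{x})=1$) and no-signalling (for each box $i$, $\sum_{a_i}p(\mathbf{a}|\mathbf{x})$ is independent of $x_i$); reduced states are obtained by summing out the outputs of the discarded boxes. An effect is any linear map from states to $[0,1]$; a measurement is a finite set $\{(r,\mu_r)\}$ of effects summing to the constant map $1$ (all such are allowed). A measurement $N=\{(s,\nu_s)\}$ refines $M=\{(r,\mu_r)\}$ if the outcomes of $N$ can be partitioned into sets $P_r$ with $\mu_r=\sum_{s\in P_r}\nu_s$; the refinement is trivial if $\nu_s\propto\mu_r$ whenever $s\in P_r$; $M$ is maximally informative if it has no non-trivial refinement. The measurement entropy of a system $Z$ in state $\mathbf{p}$ is $\hat H(Z)=\inf_M H_M(Z)$, the infimum over maximally informative measurements $M$ on $Z$ of the Shannon entropy (base 2) of the outcome distribution $(\mu_r(\mathbf{p}))_r$. For a state of $XY$, $\hat H(X)$ and $\hat H(Y)$ are evaluated on the reduced states. *)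

theory Defs
  imports "HOL-Analysis.Analysis"
begin

text \<open>A box is a pair (number of inputs, number of outputs); inputs of a box with
 m inputs are 0..<m, outputs of a box with k outputs are 0..<k.\<close>

type_synonym box = "nat \<times> nat"

definition valid_sys :: "box list \<Rightarrow> bool" where
  "valid_sys S \<longleftrightarrow> (\<forall>b\<in>set S. 1 \<le> fst b \<and> 1 \<le> snd b)"

definition inputs :: "box list \<Rightarrow> nat list set" where
  "inputs S = {x. length x = length S \<and> (\<forall>i<length S. x ! i < fst (S ! i))}"

definition outputs :: "box list \<Rightarrow> nat list set" where
  "outputs S = {a. length a = length S \<and> (\<forall>i<length S. a ! i < snd (S ! i))}"

text \<open>A state p(a|x) is written p a x; it is set to 0 outside the valid tuples.\<close>

definition is_state :: "box list \<Rightarrow> (nat list \<Rightarrow> nat list \<Rightarrow> real) \<Rightarrow> bool" where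
  "is_state S p \<longleftrightarrow>
     (\<forall>a x. (a \<notin> outputs S \<or> x \<notin> inputs S) \<longrightarrow> p a x = 0) \<and>
     (\<forall>a\<in>outputs S. \<forall>x\<in>inputs S. 0 \<le> p a x) \<and>
     (\<forall>x\<in>inputs S. (\<Sum>a\<in>outputs S. p a x) = 1) \<and>
     (\<forall>i<length S. \<forall>x\<in>inputs S. \<forall>x'\<in>inputs S.
        (\<forall>j<length S. j \<noteq> i \<longrightarrow> x ! j = x' ! j) \<longrightarrow>
        (\<forall>a\<in>outputs S. (\<Sum>c<snd (S ! i). p (a[i := c]) x) = (\<Sum>c<snd (S ! i). p (a[i := c]) x')))"

text \<open>Linear maps on states: given by a coefficient function c,
  acting as p \<mapsto> \<Sum>_{a,x} c(a,x) p(a|x). Every linear functional on the span of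
  the states is of this form.\<close>

definition lin_apply :: "box list \<Rightarrow> (nat list \<Rightarrow> nat list \<Rightarrow> real) \<Rightarrow> (nat list \<Rightarrow> nat list \<Rightarrow> real) \<Rightarrow> real" where
  "lin_apply S c p = (\<Sum>(a, x)\<in>outputs S \<times> inputs S. c a x * p a x)"

definition is_effect :: "box list \<Rightarrow> (nat list \<Rightarrow> nat list \<Rightarrow> real) \<Rightarrow> bool" where
  "is_effect S c \<longleftrightarrow> (\<forall>p. is_state S p \<longrightarrow> 0 \<le> lin_apply S c p \<and> lin_apply S c p \<le> 1)"

definition is_measurement :: "box list \<Rightarrow> nat set \<Rightarrow> (nat \<Rightarrow> nat list \<Rightarrow> nat list \<Rightarrow> real) \<Rightarrow> bool" where
  "is_measurement S R \<mu> \<longleftrightarrow> finite R \<and> (\<forall>r\<in>R. is_effect S (\<mu> r)) \<and>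
     (\<forall>p. is_state S p \<longrightarrow> (\<Sum>r\<in>R. lin_apply S (\<mu> r) p) = 1)"

text \<open>(R', \<nu>) refines (R, \<mu>) via the partition P_r = {s \<in> R'. f s = r}.\<close>

definition refines_via :: "box list \<Rightarrow> nat set \<Rightarrow> (nat \<Rightarrow> nat list \<Rightarrow> nat list \<Rightarrow> real) \<Rightarrow> (nat \<Rightarrow> nat)
     \<Rightarrow> nat set \<Rightarrow> (nat \<Rightarrow> nat list \<Rightarrow> nat list \<Rightarrow> real) \<Rightarrow> bool" where
  "refines_via S R' \<nu> f R \<mu> \<longleftrightarrow> (\<forall>s\<in>R'. f s \<in> R) \<and>
     (\<forall>r\<in>R. \<forall>p. is_state S p \<longrightarrow>
        lin_apply S (\<mu> r) p = (\<Sum>s\<in>{s\<in>R'. f s = r}. lin_apply S (\<nu> s) p))"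

definition trivial_refinement :: "box list \<Rightarrow> nat set \<Rightarrow> (nat \<Rightarrow> nat list \<Rightarrow> nat list \<Rightarrow> real) \<Rightarrow> (nat \<Rightarrow> nat)
     \<Rightarrow> (nat \<Rightarrow> nat list \<Rightarrow> nat list \<Rightarrow> real) \<Rightarrow> bool" where
  "trivial_refinement S R' \<nu> f \<mu> \<longleftrightarrow>
     (\<forall>s\<in>R'. \<exists>t::real. \<forall>p. is_state S p \<longrightarrow> lin_apply S (\<nu> s) p = t * lin_apply S (\<mu> (f s)) p)"

definition maximally_informative :: "box list \<Rightarrow> nat set \<Rightarrow> (nat \<Rightarrow> nat list \<Rightarrow> nat list \<Rightarrow> real) \<Rightarrow> bool" where
  "maximally_informative S R \<mu> \<longleftrightarrow> is_measurement S R \<mu> \<and>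
     (\<forall>R' \<nu> f. is_measurement S R' \<nu> \<and> refines_via S R' \<nu> f R \<mu> \<longrightarrow> trivial_refinement S R' \<nu> f \<mu>)"

definition ent_term :: "real \<Rightarrow> real" where
  "ent_term q = (if q \<le> 0 then 0 else - q * log 2 q)"

definition meas_entropy :: "box list \<Rightarrow> (nat list \<Rightarrow> nat list \<Rightarrow> real) \<Rightarrow> real" where
  "meas_entropy S p = Inf {(\<Sum>r\<in>R. ent_term (lin_apply S (\<mu> r) p)) | R \<mu>. maximally_informative S R \<mu>}"

text \<open>Reduced states of a state p of the joint system SX @ SY (by no-signalling the
  choice of the inputs of the discarded boxes is irrelevant; we take all-zero inputs).\<close>

definition reduce_left :: "box list \<Rightarrow> box list \<Rightarrow> (nat list \<Rightarrow> nat list \<Rightarrow> real) \<Rightarrow> nat list \<Rightarrow> nat list \<Rightarrow> real" where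
  "reduce_left SX SY p a x = (if a \<in> outputs SX \<and> x \<in> inputs SX
     then (\<Sum>b\<in>outputs SY. p (a @ b) (x @ replicate (length SY) 0)) else 0)"

definition reduce_right :: "box list \<Rightarrow> box list \<Rightarrow> (nat list \<Rightarrow> nat list \<Rightarrow> real) \<Rightarrow> nat list \<Rightarrow> nat list \<Rightarrow> real" where
  "reduce_right SX SY p b y = (if b \<in> outputs SY \<and> y \<in> inputs SY
     then (\<Sum>a\<in>outputs SX. p (a @ b) (replicate (length SX) 0 @ y)) else 0)"

end

theory Submission
  imports Defs
begin

text \<open>Two facts about measurement entropy give the lower bounds. Deterministic states span the
  no-signalling functions, so every maximally informative measurement on a box with a classical
  partner box reads a single coordinate p(a, c | x, 0) per outcome; its entropy is therefore at least
  H(c) plus the average over c of the smallest conditional entropy of a over the inputs x. And no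
  maximally informative measurement can be refined by the outputs of classical boxes, so its entropy
  is at least the entropy of those outputs.

  The witnesses are four-box states: Alice holds a two-input box X and a classical box A, Bob a
  two-input box Y and a classical box B. A and B are independent, each 0 with probability 1 - s and
  otherwise uniform over N values; X outputs 0 at input bit B and is uniformly random otherwise, Y
  outputs bit B at input bit A and is uniformly random otherwise. Locally the uncertainty of Alice
  about B (and of Bob about A) cannot be removed, but jointly the wiring that reads A, queries Y at
  bit A and then X at bit B reveals everything except A and B. Writing E(s, N) = h(s) + s log N for
  the entropy of A, the entropy vector is (E(s_A, N_A) + E(s_B, N_X), E(s_B, N_B) + E(s_A, N_Y),
  E(s_A, N_A) + E(s_B, N_B)), where N_X, N_Y count the random outputs of X, Y. Letting s \<rightarrow> 0 with
  s log N prescribed makes h(s) vanish, which reaches every point with 0 < z < x + y.\<close>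

section \<open>Systems of boxes\<close>

lemma outputs_Nil[simp]: "outputs [] = {[]}" by (auto simp: outputs_def)
lemma inputs_Nil[simp]: "inputs [] = {[]}" by (auto simp: inputs_def)

lemma outputs_snoc_iff:
  "a @ [c] \<in> outputs (S @ [b]) \<longleftrightarrow> a \<in> outputs S \<and> c < snd b"
proof -
  have "a @ [c] \<in> outputs (S @ [b]) \<longleftrightarrow> length a = length S \<and> (\<forall>i<Suc (length S). (a@[c])!i < snd ((S@[b])!i))"
    by (simp add: outputs_def)
  also have "\<dots> \<longleftrightarrow> length a = length S \<and> c < snd b \<and> (\<forall>i<length S. a!i < snd (S!i))"
    by (auto simp: All_less_Suc nth_append)
  finally show ?thesis by (auto simp: outputs_def)
qed

lemma inputs_snoc_iff:
  "a @ [c] \<in> inputs (S @ [b]) \<longleftrightarrow> a \<in> inputs S \<and> c < fst b"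
proof -
  have "a @ [c] \<in> inputs (S @ [b]) \<longleftrightarrow> length a = length S \<and> (\<forall>i<Suc (length S). (a@[c])!i < fst ((S@[b])!i))"
    by (simp add: inputs_def)
  also have "\<dots> \<longleftrightarrow> length a = length S \<and> c < fst b \<and> (\<forall>i<length S. a!i < fst (S!i))"
    by (auto simp: All_less_Suc nth_append)
  finally show ?thesis by (auto simp: inputs_def)
qed

lemma outputs_snoc: "outputs (S @ [b]) = (\<lambda>(a,c). a @ [c]) ` (outputs S \<times> {..<snd b})"
proof (intro set_eqI iffI)
  fix a assume a: "a \<in> outputs (S @ [b])"
  then have "a \<noteq> []" by (auto simp: outputs_def)
  then obtain a' c where "a = a' @ [c]" by (cases a rule: rev_exhaust) auto
  with a show "a \<in> (\<lambda>(a,c). a @ [c]) ` (outputs S \<times> {..<snd b})" by (auto simp: outputs_snoc_iff)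
qed (auto simp: outputs_snoc_iff)

lemma inputs_snoc: "inputs (S @ [b]) = (\<lambda>(a,c). a @ [c]) ` (inputs S \<times> {..<fst b})"
proof (intro set_eqI iffI)
  fix a assume a: "a \<in> inputs (S @ [b])"
  then have "a \<noteq> []" by (auto simp: inputs_def)
  then obtain a' c where "a = a' @ [c]" by (cases a rule: rev_exhaust) auto
  with a show "a \<in> (\<lambda>(a,c). a @ [c]) ` (inputs S \<times> {..<fst b})" by (auto simp: inputs_snoc_iff)
qed (auto simp: inputs_snoc_iff)

lemma inj_on_snoc: "inj_on (\<lambda>(a,c). a @ [c]) A" by (auto simp: inj_on_def)

lemma finite_outputs[simp]: "finite (outputs S)"
  by (induction S rule: rev_induct) (simp_all add: outputs_snoc)

lemma finite_inputs[simp]: "finite (inputs S)"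
  by (induction S rule: rev_induct) (simp_all add: inputs_snoc)

lemma sum_outputs_snoc:
  "(\<Sum>a\<in>outputs (S@[b]). F a) = (\<Sum>a\<in>outputs S. \<Sum>c<snd b. F (a @ [c]))"
  unfolding outputs_snoc by (subst sum.reindex[OF inj_on_snoc]) (simp add: sum.cartesian_product case_prod_unfold)

lemma sum_inputs_snoc:
  "(\<Sum>a\<in>inputs (S@[b]). F a) = (\<Sum>a\<in>inputs S. \<Sum>c<fst b. F (a @ [c]))"
  unfolding inputs_snoc by (subst sum.reindex[OF inj_on_snoc]) (simp add: sum.cartesian_product case_prod_unfold)

lemma outputs_Cons_iff: "c # a \<in> outputs (b # S) \<longleftrightarrow> c < snd b \<and> a \<in> outputs S"
  by (auto simp: outputs_def All_less_Suc2)

lemma inputs_Cons_iff: "c # a \<in> inputs (b # S) \<longleftrightarrow> c < fst b \<and> a \<in> inputs S"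
  by (auto simp: inputs_def All_less_Suc2)

lemma outputs_Cons: "outputs (b # S) = (\<lambda>(c,a). c # a) ` ({..<snd b} \<times> outputs S)"
proof (intro set_eqI iffI)
  fix a assume a: "a \<in> outputs (b # S)"
  then have "a \<noteq> []" by (auto simp: outputs_def)
  then obtain c a' where "a = c # a'" by (cases a) auto
  with a show "a \<in> (\<lambda>(c,a). c # a) ` ({..<snd b} \<times> outputs S)" by (auto simp: outputs_Cons_iff)
qed (auto simp: outputs_Cons_iff)

lemma inputs_Cons: "inputs (b # S) = (\<lambda>(c,a). c # a) ` ({..<fst b} \<times> inputs S)"
proof (intro set_eqI iffI)
  fix a assume a: "a \<in> inputs (b # S)"
  then have "a \<noteq> []" by (auto simp: inputs_def)
  then obtain c a' where "a = c # a'" by (cases a) auto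
  with a show "a \<in> (\<lambda>(c,a). c # a) ` ({..<fst b} \<times> inputs S)" by (auto simp: inputs_Cons_iff)
qed (auto simp: inputs_Cons_iff)

lemma inj_on_Cons: "inj_on (\<lambda>(c,a). c # a) A" by (auto simp: inj_on_def)

lemma sum_outputs_Cons:
  "(\<Sum>a\<in>outputs (b # S). F a) = (\<Sum>c<snd b. \<Sum>a\<in>outputs S. F (c # a))"
  unfolding outputs_Cons by (subst sum.reindex[OF inj_on_Cons]) (simp add: sum.cartesian_product case_prod_unfold)

lemma sum_inputs_Cons:
  "(\<Sum>a\<in>inputs (b # S). F a) = (\<Sum>c<fst b. \<Sum>a\<in>inputs S. F (c # a))"
  unfolding inputs_Cons by (subst sum.reindex[OF inj_on_Cons]) (simp add: sum.cartesian_product case_prod_unfold)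

lemma lin_apply_outputs_inputs: "lin_apply S C p = (\<Sum>a\<in>outputs S. \<Sum>x\<in>inputs S. C a x * p a x)"
  unfolding lin_apply_def by (simp add: sum.cartesian_product)

lemma lin_apply_inputs_outputs: "lin_apply S C p = (\<Sum>x\<in>inputs S. \<Sum>a\<in>outputs S. C a x * p a x)"
  unfolding lin_apply_outputs_inputs by (rule sum.swap)

lemma lin_apply_snoc:
  "lin_apply (S@[b]) C p = (\<Sum>c<snd b. \<Sum>y<fst b.
      lin_apply S (\<lambda>a x. C (a@[c]) (x@[y])) (\<lambda>a x. p (a@[c]) (x@[y])))"
proof -
  have "lin_apply (S@[b]) C p = (\<Sum>a\<in>outputs S. \<Sum>c<snd b. \<Sum>x\<in>inputs S. \<Sum>y<fst b. C (a@[c]) (x@[y]) * p (a@[c]) (x@[y]))"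
    unfolding lin_apply_outputs_inputs sum_outputs_snoc sum_inputs_snoc ..
  also have "\<dots> = (\<Sum>c<snd b. \<Sum>a\<in>outputs S. \<Sum>x\<in>inputs S. \<Sum>y<fst b. C (a@[c]) (x@[y]) * p (a@[c]) (x@[y]))"
    by (rule sum.swap)
  also have "\<dots> = (\<Sum>c<snd b. \<Sum>a\<in>outputs S. \<Sum>y<fst b. \<Sum>x\<in>inputs S. C (a@[c]) (x@[y]) * p (a@[c]) (x@[y]))"
    by (intro sum.cong refl sum.swap)
  also have "\<dots> = (\<Sum>c<snd b. \<Sum>y<fst b. \<Sum>a\<in>outputs S. \<Sum>x\<in>inputs S. C (a@[c]) (x@[y]) * p (a@[c]) (x@[y]))"
    by (intro sum.cong refl sum.swap)
  finally show ?thesis by (simp only: lin_apply_outputs_inputs)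
qed

lemma lin_apply_sum_coef: "lin_apply S (\<lambda>a x. \<Sum>i\<in>I. C i a x) p = (\<Sum>i\<in>I. lin_apply S (C i) p)"
  unfolding lin_apply_def case_prod_unfold by (simp add: sum_distrib_right) (rule sum.swap)

lemma lin_apply_sum_state: "lin_apply S C (\<lambda>a x. \<Sum>i\<in>I. p i a x) = (\<Sum>i\<in>I. lin_apply S C (p i))"
  unfolding lin_apply_def case_prod_unfold by (simp add: sum_distrib_left) (rule sum.swap)

lemma lin_apply_scale_state: "lin_apply S C (\<lambda>a x. t * p a x) = t * lin_apply S C p"
  unfolding lin_apply_def case_prod_unfold by (simp add: sum_distrib_left mult_ac)

lemma lin_apply_scale_coef: "lin_apply S (\<lambda>a x. t * C a x) p = t * lin_apply S C p"
  unfolding lin_apply_def case_prod_unfold by (simp add: sum_distrib_left mult_ac)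

lemma lin_apply_diff_coef: "lin_apply S (\<lambda>a x. C a x - D a x) p = lin_apply S C p - lin_apply S D p"
  unfolding lin_apply_def case_prod_unfold by (simp add: sum_subtractf algebra_simps)

lemma lin_apply_cong:
  assumes "\<And>a x. a \<in> outputs S \<Longrightarrow> x \<in> inputs S \<Longrightarrow> C a x * p a x = D a x * q a x"
  shows "lin_apply S C p = lin_apply S D q"
  unfolding lin_apply_def using assms by (intro sum.cong) auto

lemma lin_apply_zero_state: "lin_apply S C (\<lambda>a x. 0) = 0"
  unfolding lin_apply_def by simp

definition coord_effect :: "nat list \<Rightarrow> nat list \<Rightarrow> nat list \<Rightarrow> nat list \<Rightarrow> real" where
  "coord_effect a0 x0 = (\<lambda>a x. if a = a0 \<and> x = x0 then 1 else 0)"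

lemma lin_apply_coord_effect:
  assumes "a0 \<in> outputs S" "x0 \<in> inputs S"
  shows "lin_apply S (coord_effect a0 x0) p = p a0 x0"
proof -
  have "lin_apply S (coord_effect a0 x0) p = (\<Sum>a\<in>outputs S. \<Sum>x\<in>inputs S. if a = a0 \<and> x = x0 then p a x else 0)"
    unfolding lin_apply_outputs_inputs coord_effect_def by (intro sum.cong refl) auto
  also have "\<dots> = (\<Sum>a\<in>outputs S. if a = a0 then p a x0 else 0)"
    using assms by (intro sum.cong refl) (auto simp: sum.delta')
  also have "\<dots> = p a0 x0" using assms by (simp add: sum.delta')
  finally show ?thesis .
qed

definition norm_effect :: "nat list \<Rightarrow> nat list \<Rightarrow> nat list \<Rightarrow> real" where
  "norm_effect x0 = (\<lambda>a x. if x = x0 then 1 else 0)"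

lemma lin_apply_norm_effect:
  assumes "x0 \<in> inputs S"
  shows "lin_apply S (norm_effect x0) p = (\<Sum>a\<in>outputs S. p a x0)"
proof -
  have "lin_apply S (norm_effect x0) p = (\<Sum>a\<in>outputs S. \<Sum>x\<in>inputs S. if x = x0 then p a x else 0)"
    unfolding lin_apply_outputs_inputs norm_effect_def by (intro sum.cong refl) auto
  also have "\<dots> = (\<Sum>a\<in>outputs S. p a x0)"
    using assms by (intro sum.cong refl) (auto simp: sum.delta')
  finally show ?thesis .
qed

lemma state_vanish: "is_state S p \<Longrightarrow> a \<notin> outputs S \<or> x \<notin> inputs S \<Longrightarrow> p a x = 0"
  unfolding is_state_def by blast
lemma state_nonneg: "is_state S p \<Longrightarrow> 0 \<le> p a x"
  unfolding is_state_def by (cases "a \<in> outputs S \<and> x \<in> inputs S") auto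
lemma state_norm: "is_state S p \<Longrightarrow> x \<in> inputs S \<Longrightarrow> (\<Sum>a\<in>outputs S. p a x) = 1"
  unfolding is_state_def by blast

lemma state_le_1: "is_state S p \<Longrightarrow> p a x \<le> 1"
proof (cases "a \<in> outputs S \<and> x \<in> inputs S")
  case True
  assume st: "is_state S p"
  have "p a x \<le> (\<Sum>a\<in>outputs S. p a x)"
    using True st by (intro member_le_sum) (auto simp: state_nonneg)
  then show ?thesis using state_norm[OF st] True by simp
next
  case False
  assume st: "is_state S p"
  then show ?thesis using state_vanish[OF st] False by simp
qed

lemma valid_sys_nth: "valid_sys S \<Longrightarrow> i < length S \<Longrightarrow> 1 \<le> fst (S!i) \<and> 1 \<le> snd (S!i)"
  unfolding valid_sys_def using nth_mem by blast

lemma zero_input_in_inputs: "valid_sys S \<Longrightarrow> replicate (length S) 0 \<in> inputs S"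
  unfolding inputs_def using valid_sys_nth by fastforce

lemma effect_bounds: "is_effect S c \<Longrightarrow> is_state S p \<Longrightarrow> 0 \<le> lin_apply S c p \<and> lin_apply S c p \<le> 1"
  unfolding is_effect_def by blast

lemma measurement_effect: "is_measurement S R \<mu> \<Longrightarrow> r \<in> R \<Longrightarrow> is_effect S (\<mu> r)"
  unfolding is_measurement_def by blast

lemma measurement_sum: "is_measurement S R \<mu> \<Longrightarrow> is_state S p \<Longrightarrow> (\<Sum>r\<in>R. lin_apply S (\<mu> r) p) = 1"
  unfolding is_measurement_def by blast

lemma measurement_finite: "is_measurement S R \<mu> \<Longrightarrow> finite R"
  unfolding is_measurement_def by blast

lemma refinement_le:
  assumes M: "is_measurement S R' \<nu>" and ref: "refines_via S R' \<nu> f R \<mu>" and s: "s \<in> R'" and p: "is_state S p"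
  shows "0 \<le> lin_apply S (\<nu> s) p" "lin_apply S (\<nu> s) p \<le> lin_apply S (\<mu> (f s)) p"
proof -
  show nn: "0 \<le> lin_apply S (\<nu> s) p" using effect_bounds[OF measurement_effect[OF M s] p] by simp
  have fs: "f s \<in> R" using ref s unfolding refines_via_def by blast
  have eq: "lin_apply S (\<mu> (f s)) p = (\<Sum>s'\<in>{s'\<in>R'. f s' = f s}. lin_apply S (\<nu> s') p)"
    using ref fs p unfolding refines_via_def by blast
  have "lin_apply S (\<nu> s) p \<le> (\<Sum>s'\<in>{s'\<in>R'. f s' = f s}. lin_apply S (\<nu> s') p)"
    using s measurement_finite[OF M] by (intro member_le_sum) (auto intro: effect_bounds[OF measurement_effect[OF M] p, THEN conjunct1])
  then show "lin_apply S (\<nu> s) p \<le> lin_apply S (\<mu> (f s)) p" using eq by simp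
qed

section \<open>Deterministic states span the no-signalling functions\<close>

definition det_output :: "(nat \<Rightarrow> nat \<Rightarrow> nat) \<Rightarrow> nat list \<Rightarrow> nat list" where
  "det_output \<alpha> x = map (\<lambda>i. \<alpha> i (x!i)) [0..<length x]"

definition valid_strategy :: "box list \<Rightarrow> (nat \<Rightarrow> nat \<Rightarrow> nat) \<Rightarrow> bool" where
  "valid_strategy S \<alpha> \<longleftrightarrow> (\<forall>i<length S. \<forall>y<fst (S!i). \<alpha> i y < snd (S!i))"

definition det_state :: "box list \<Rightarrow> (nat \<Rightarrow> nat \<Rightarrow> nat) \<Rightarrow> nat list \<Rightarrow> nat list \<Rightarrow> real" where
  "det_state S \<alpha> a x = (if a \<in> outputs S \<and> x \<in> inputs S \<and> a = det_output \<alpha> x then 1 else 0)"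

lemma length_det_output[simp]: "length (det_output \<alpha> x) = length x" by (simp add: det_output_def)
lemma nth_det_output[simp]: "i < length x \<Longrightarrow> det_output \<alpha> x ! i = \<alpha> i (x!i)" by (simp add: det_output_def)

lemma det_output_Cons2: "det_output \<alpha> [x0, x1] = [\<alpha> 0 x0, \<alpha> 1 x1]"
  by (simp add: det_output_def)

lemma det_output_Cons4: "det_output \<alpha> [x0, x1, x2, x3] = [\<alpha> 0 x0, \<alpha> 1 x1, \<alpha> 2 x2, \<alpha> 3 x3]"
  by (simp add: det_output_def numeral_eq_Suc upt_rec)

lemma det_output_in_outputs: "valid_strategy S \<alpha> \<Longrightarrow> x \<in> inputs S \<Longrightarrow> det_output \<alpha> x \<in> outputs S"
  by (auto simp: valid_strategy_def inputs_def outputs_def)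

lemma lin_apply_det_state_sum:
  assumes "valid_strategy S \<alpha>"
  shows "lin_apply S C (det_state S \<alpha>) = (\<Sum>x\<in>inputs S. C (det_output \<alpha> x) x)"
  unfolding lin_apply_inputs_outputs
proof (rule sum.cong[OF refl])
  fix x assume x: "x \<in> inputs S"
  have "(\<Sum>a\<in>outputs S. C a x * det_state S \<alpha> a x) = (\<Sum>a\<in>outputs S. if a = det_output \<alpha> x then C a x else 0)"
    using x by (intro sum.cong) (auto simp: det_state_def)
  also have "\<dots> = C (det_output \<alpha> x) x" using det_output_in_outputs[OF assms x] by (simp add: sum.delta')
  finally show "(\<Sum>a\<in>outputs S. C a x * det_state S \<alpha> a x) = C (det_output \<alpha> x) x" .
qed

lemma det_state_no_signalling:
  assumes "valid_strategy S \<alpha>" and i: "i < length S" and x: "x \<in> inputs S" and x': "x' \<in> inputs S"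
    and agree: "\<forall>j<length S. j \<noteq> i \<longrightarrow> x ! j = x' ! j" and a: "a \<in> outputs S"
  shows "(\<Sum>c<snd (S ! i). det_state S \<alpha> (a[i := c]) x) = (\<Sum>c<snd (S ! i). det_state S \<alpha> (a[i := c]) x')"
proof -
  have key: "(\<Sum>c<snd (S!i). det_state S \<alpha> (a[i:=c]) z)
     = (if \<forall>j<length S. j \<noteq> i \<longrightarrow> a!j = \<alpha> j (z!j) then 1 else 0)" if z: "z \<in> inputs S" for z
  proof -
    have lz: "length z = length S" "length a = length S" using z a by (auto simp: inputs_def outputs_def)
    have v: "\<alpha> i (z!i) < snd (S!i)" using assms z i by (auto simp: valid_strategy_def inputs_def)
    have "(\<Sum>c<snd (S!i). det_state S \<alpha> (a[i:=c]) z)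
        = (\<Sum>c<snd (S!i). if c = \<alpha> i (z!i) \<and> (\<forall>j<length S. j \<noteq> i \<longrightarrow> a!j = \<alpha> j (z!j)) then 1 else 0)"
    proof (intro sum.cong refl)
      fix c assume c: "c \<in> {..<snd (S!i)}"
      have mem: "a[i:=c] \<in> outputs S" using a c i by (auto simp: outputs_def nth_list_update)
      have "a[i:=c] = det_output \<alpha> z \<longleftrightarrow> c = \<alpha> i (z!i) \<and> (\<forall>j<length S. j \<noteq> i \<longrightarrow> a!j = \<alpha> j (z!j))"
        using lz i by (auto simp: list_eq_iff_nth_eq nth_list_update)
      then show "det_state S \<alpha> (a[i:=c]) z = (if c = \<alpha> i (z!i) \<and> (\<forall>j<length S. j \<noteq> i \<longrightarrow> a!j = \<alpha> j (z!j)) then 1 else 0)"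
        using mem z by (simp add: det_state_def)
    qed
    also have "\<dots> = (if \<forall>j<length S. j \<noteq> i \<longrightarrow> a!j = \<alpha> j (z!j) then 1 else 0)"
    proof (cases "\<forall>j<length S. j \<noteq> i \<longrightarrow> a!j = \<alpha> j (z!j)")
      case True then show ?thesis using v by (simp add: sum.delta)
    next
      case False then show ?thesis by (intro trans[OF sum.neutral]) auto
    qed
    finally show ?thesis .
  qed
  have "(\<forall>j<length S. j \<noteq> i \<longrightarrow> a!j = \<alpha> j (x!j)) \<longleftrightarrow> (\<forall>j<length S. j \<noteq> i \<longrightarrow> a!j = \<alpha> j (x'!j))"
    using agree by auto
  then show ?thesis unfolding key[OF x] key[OF x'] by simp
qed

lemma det_state_norm:
  assumes "valid_strategy S \<alpha>" "x \<in> inputs S"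
  shows "(\<Sum>a\<in>outputs S. det_state S \<alpha> a x) = 1"
proof -
  have "(\<Sum>a\<in>outputs S. det_state S \<alpha> a x) = (\<Sum>a\<in>outputs S. if a = det_output \<alpha> x then 1 else 0)"
    using assms(2) by (intro sum.cong) (auto simp: det_state_def)
  also have "\<dots> = 1" using det_output_in_outputs[OF assms] by (simp add: sum.delta')
  finally show ?thesis .
qed

lemma det_state_is_state:
  assumes "valid_strategy S \<alpha>"
  shows "is_state S (det_state S \<alpha>)"
proof -
  have A: "\<forall>a x. (a\<notin>outputs S \<or> x\<notin>inputs S) \<longrightarrow> det_state S \<alpha> a x = 0" by (auto simp: det_state_def)
  have B: "\<forall>a\<in>outputs S. \<forall>x\<in>inputs S. 0 \<le> det_state S \<alpha> a x" by (simp add: det_state_def)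
  have C: "\<forall>x\<in>inputs S. (\<Sum>a\<in>outputs S. det_state S \<alpha> a x) = 1" using det_state_norm[OF assms] by blast
  have D: "\<forall>i<length S. \<forall>x\<in>inputs S. \<forall>x'\<in>inputs S.
        (\<forall>j<length S. j \<noteq> i \<longrightarrow> x ! j = x' ! j) \<longrightarrow>
        (\<forall>a\<in>outputs S. (\<Sum>c<snd (S ! i). det_state S \<alpha> (a[i := c]) x) = (\<Sum>c<snd (S ! i). det_state S \<alpha> (a[i := c]) x'))"
    using det_state_no_signalling[OF assms] by blast
  show ?thesis unfolding is_state_def by (intro conjI; fact)
qed

definition ns_function :: "box list \<Rightarrow> (nat list \<Rightarrow> nat list \<Rightarrow> real) \<Rightarrow> bool" where
 "ns_function S r \<longleftrightarrow> (\<forall>a x. (a \<notin> outputs S \<or> x \<notin> inputs S) \<longrightarrow> r a x = 0) \<and>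
   (\<forall>i<length S. \<forall>x\<in>inputs S. \<forall>x'\<in>inputs S. (\<forall>j<length S. j \<noteq> i \<longrightarrow> x!j = x'!j) \<longrightarrow>
      (\<forall>a\<in>outputs S. (\<Sum>c<snd (S!i). r (a[i:=c]) x) = (\<Sum>c<snd (S!i). r (a[i:=c]) x')))"

lemma ns_function_vanish: "ns_function S r \<Longrightarrow> a \<notin> outputs S \<or> x \<notin> inputs S \<Longrightarrow> r a x = 0"
  unfolding ns_function_def by blast

lemma ns_function_no_signalling: "ns_function S r \<Longrightarrow> i < length S \<Longrightarrow> x \<in> inputs S \<Longrightarrow> x' \<in> inputs S \<Longrightarrow>
   (\<forall>j<length S. j \<noteq> i \<longrightarrow> x!j = x'!j) \<Longrightarrow> a \<in> outputs S \<Longrightarrow>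
   (\<Sum>c<snd (S!i). r (a[i:=c]) x) = (\<Sum>c<snd (S!i). r (a[i:=c]) x')"
  unfolding ns_function_def by blast

lemma state_ns_function: "is_state S p \<Longrightarrow> ns_function S p"
  unfolding is_state_def ns_function_def by (elim conjE) (intro conjI; assumption)

lemma ns_function_sum:
  assumes "\<And>i. i \<in> I \<Longrightarrow> ns_function S (r i)"
  shows "ns_function S (\<lambda>a x. \<Sum>i\<in>I. r i a x)"
proof -
  have A: "\<forall>a x. (a \<notin> outputs S \<or> x \<notin> inputs S) \<longrightarrow> (\<Sum>i\<in>I. r i a x) = 0"
  proof (intro allI impI)
    fix a x assume "a \<notin> outputs S \<or> x \<notin> inputs S"
    then show "(\<Sum>i\<in>I. r i a x) = 0" using assms unfolding ns_function_def by (intro sum.neutral) blast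
  qed
  have B: "\<forall>k<length S. \<forall>x\<in>inputs S. \<forall>x'\<in>inputs S. (\<forall>j<length S. j \<noteq> k \<longrightarrow> x!j = x'!j) \<longrightarrow>
      (\<forall>a\<in>outputs S. (\<Sum>c<snd (S!k). \<Sum>i\<in>I. r i (a[k:=c]) x) = (\<Sum>c<snd (S!k). \<Sum>i\<in>I. r i (a[k:=c]) x'))"
  proof (intro allI impI ballI)
    fix k x x' a assume k: "k < length S" and x: "x \<in> inputs S" and x': "x' \<in> inputs S"
      and ag: "\<forall>j<length S. j \<noteq> k \<longrightarrow> x ! j = x' ! j" and a: "a \<in> outputs S"
    have "(\<Sum>c<snd (S ! k). \<Sum>i\<in>I. r i (a[k := c]) x) = (\<Sum>i\<in>I. \<Sum>c<snd (S ! k). r i (a[k := c]) x)"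
      by (rule sum.swap)
    also have "\<dots> = (\<Sum>i\<in>I. \<Sum>c<snd (S ! k). r i (a[k := c]) x')"
    proof (rule sum.cong[OF refl])
      fix i assume "i \<in> I"
      then have "ns_function S (r i)" by (rule assms)
      then show "(\<Sum>c<snd (S ! k). r i (a[k := c]) x) = (\<Sum>c<snd (S ! k). r i (a[k := c]) x')"
        using k x x' ag a unfolding ns_function_def by blast
    qed
    also have "\<dots> = (\<Sum>c<snd (S ! k). \<Sum>i\<in>I. r i (a[k := c]) x')"
      by (rule sum.swap)
    finally show "(\<Sum>c<snd (S ! k). \<Sum>i\<in>I. r i (a[k := c]) x) = (\<Sum>c<snd (S ! k). \<Sum>i\<in>I. r i (a[k := c]) x')" .
  qed
  show ?thesis unfolding ns_function_def using A B by (intro conjI)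
qed

lemma det_output_snoc:
  assumes "length x = length S"
  shows "det_output (\<alpha>(length S := \<beta>)) (x @ [y]) = det_output \<alpha> x @ [\<beta> y]"
proof -
  have "det_output (\<alpha>(length S := \<beta>)) (x @ [y]) = map (\<lambda>i. (\<alpha>(length S := \<beta>)) i ((x@[y])!i)) [0..<length S] @ [\<beta> y]"
    using assms by (simp add: det_output_def nth_append)
  also have "map (\<lambda>i. (\<alpha>(length S := \<beta>)) i ((x@[y])!i)) [0..<length S] = det_output \<alpha> x"
    unfolding det_output_def using assms by (intro map_cong) (auto simp: nth_append)
  finally show ?thesis .
qed

lemma sum_choices_eq_0_imp_const:
  fixes G :: "nat \<Rightarrow> nat \<Rightarrow> 'a::ab_group_add"
  assumes zero: "\<And>\<beta>. \<forall>y<m. \<beta> y < n \<Longrightarrow> (\<Sum>y<m. G (\<beta> y) y) = 0"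
    and c: "c < n" and y: "y < m"
  shows "G c y = G 0 y"
proof -
  define \<beta> where "\<beta> y' = (if y' = y then c else 0)" for y'
  have "(\<Sum>y'<m. G (\<beta> y') y') = G c y + (\<Sum>y'\<in>{..<m} - {y}. G 0 y')"
    using y by (subst sum.remove[of _ y]) (auto simp: \<beta>_def intro!: sum.cong)
  moreover have "(\<Sum>y'<m. G 0 y') = G 0 y + (\<Sum>y'\<in>{..<m} - {y}. G 0 y')"
    using y by (subst sum.remove[of _ y]) auto
  moreover have "(\<Sum>y'<m. G (\<beta> y') y') = 0" using c by (intro zero) (simp add: \<beta>_def)
  moreover have "(\<Sum>y'<m. G 0 y') = 0" using zero[of "\<lambda>_. 0"] c by simp
  ultimately show ?thesis by (metis add_right_cancel)
qed

lemma ns_function_snoc_slice: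
  assumes r: "ns_function (S@[b]) r" and c: "c < snd b" and y: "y < fst b"
  shows "ns_function S (\<lambda>a x. r (a@[c]) (x@[y]))"
  unfolding ns_function_def
proof (intro conjI allI impI ballI)
  fix a x assume "a \<notin> outputs S \<or> x \<notin> inputs S"
  then have "a@[c] \<notin> outputs (S@[b]) \<or> x@[y] \<notin> inputs (S@[b])"
    by (auto simp: outputs_snoc_iff inputs_snoc_iff)
  then show "r (a@[c]) (x@[y]) = 0" using ns_function_vanish[OF r] by blast
next
  fix i x x' a assume i: "i < length S" and x: "x \<in> inputs S" and x': "x' \<in> inputs S"
    and ag: "\<forall>j<length S. j \<noteq> i \<longrightarrow> x ! j = x' ! j" and a: "a \<in> outputs S"
  have la: "length a = length S" "length x = length S" "length x' = length S"
    using a x x' by (auto simp: outputs_def inputs_def)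
  have "x@[y] \<in> inputs (S@[b])" "x'@[y] \<in> inputs (S@[b])" "a@[c] \<in> outputs (S@[b])"
    using x x' a c y by (simp_all add: outputs_snoc_iff inputs_snoc_iff)
  moreover have "\<forall>j<length (S@[b]). j \<noteq> i \<longrightarrow> (x@[y]) ! j = (x'@[y]) ! j"
    using ag la by (simp add: All_less_Suc nth_append)
  ultimately have "(\<Sum>c'<snd ((S@[b])!i). r ((a@[c])[i:=c']) (x@[y]))
      = (\<Sum>c'<snd ((S@[b])!i). r ((a@[c])[i:=c']) (x'@[y]))"
    using i by (intro ns_function_no_signalling[OF r]) auto
  then show "(\<Sum>c'<snd (S ! i). r ((a[i := c'])@[c]) (x@[y])) = (\<Sum>c'<snd (S ! i). r ((a[i := c'])@[c]) (x'@[y]))"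
    using i la by (simp add: nth_append list_update_append)
qed

lemma ns_function_snoc_marginal:
  assumes r: "ns_function (S@[b]) r" and y: "y < fst b" and b: "0 < fst b" "0 < snd b"
  shows "(\<lambda>a x. \<Sum>c<snd b. r (a@[c]) (x@[y])) = (\<lambda>a x. \<Sum>c<snd b. r (a@[c]) (x@[0]))"
proof (intro ext)
  fix a x
  show "(\<Sum>c<snd b. r (a@[c]) (x@[y])) = (\<Sum>c<snd b. r (a@[c]) (x@[0]))"
  proof (cases "a \<in> outputs S \<and> x \<in> inputs S")
    case True
    have la: "length a = length S" "length x = length S" using True by (auto simp: outputs_def inputs_def)
    have "x@[y] \<in> inputs (S@[b])" "x@[0] \<in> inputs (S@[b])" "a@[0] \<in> outputs (S@[b])"
      using True y b by (simp_all add: outputs_snoc_iff inputs_snoc_iff)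
    moreover have "\<forall>j<length (S@[b]). j \<noteq> length S \<longrightarrow> (x@[y]) ! j = (x@[0]) ! j"
      using la by (simp add: All_less_Suc nth_append)
    ultimately have "(\<Sum>c<snd ((S@[b])!length S). r ((a@[0])[length S:=c]) (x@[y]))
         = (\<Sum>c<snd ((S@[b])!length S). r ((a@[0])[length S:=c]) (x@[0]))"
      by (intro ns_function_no_signalling[OF r]) auto
    then show ?thesis using la by (simp add: list_update_append)
  next
    case False
    have "(\<Sum>c<snd b. r (a@[c]) (x@[y'])) = 0" if "y' < fst b" for y'
      using ns_function_vanish[OF ns_function_snoc_slice[OF r _ that]] False by (intro sum.neutral) auto
    then show ?thesis using y b by simp
  qed
qed

text \<open>Every no-signalling function lies in the linear span of the deterministic states, so a linear
  functional is determined by its values on them. The induction adds one box at a time: a strategy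
  for the smaller system together with one output per input of the new box is a strategy for the
  larger one.\<close>

lemma det_states_span_ns_functions:
  assumes "valid_sys S" "\<forall>\<alpha>. valid_strategy S \<alpha> \<longrightarrow> lin_apply S \<Phi> (det_state S \<alpha>) = 0" "ns_function S r"
  shows "lin_apply S \<Phi> r = 0"
  using assms
proof (induction S arbitrary: \<Phi> r rule: rev_induct)
  case Nil
  have "valid_strategy [] (\<lambda>_ _. 0)" by (simp add: valid_strategy_def)
  then have "lin_apply [] \<Phi> (det_state [] (\<lambda>_ _. 0)) = 0" using Nil by blast
  then show ?case by (simp add: lin_apply_outputs_inputs det_state_def det_output_def)
next
  case (snoc b S)
  have vS: "valid_sys S" and b1: "1 \<le> snd b" "1 \<le> fst b" using snoc.prems(1) by (auto simp: valid_sys_def)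
  define \<Psi> where "\<Psi> c y = (\<lambda>a x. \<Phi> (a@[c]) (x@[y]))" for c y
  define rs where "rs c y = (\<lambda>a x. r (a@[c]) (x@[y]))" for c y
  have choices: "(\<Sum>y<fst b. lin_apply S (\<Psi> (\<beta> y) y) r') = 0"
    if \<beta>: "\<forall>y<fst b. \<beta> y < snd b" and r': "ns_function S r'" for \<beta> r'
  proof -
    have "lin_apply S (\<lambda>a x. \<Sum>y<fst b. \<Psi> (\<beta> y) y a x) r' = 0"
    proof (rule snoc.IH[OF vS _ r'], intro allI impI)
      fix \<alpha> assume va: "valid_strategy S \<alpha>"
      define \<alpha>' where "\<alpha>' = \<alpha>(length S := \<beta>)"
      have v': "valid_strategy (S@[b]) \<alpha>'"
        using va \<beta> unfolding valid_strategy_def by (simp add: All_less_Suc nth_append \<alpha>'_def)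
      have "lin_apply (S@[b]) \<Phi> (det_state (S@[b]) \<alpha>')
          = lin_apply S (\<lambda>a x. \<Sum>y<fst b. \<Psi> (\<beta> y) y a x) (det_state S \<alpha>)"
        unfolding lin_apply_det_state_sum[OF v'] lin_apply_det_state_sum[OF va] sum_inputs_snoc
        by (intro sum.cong refl) (simp add: \<alpha>'_def det_output_snoc \<Psi>_def inputs_def)
      then show "lin_apply S (\<lambda>a x. \<Sum>y<fst b. \<Psi> (\<beta> y) y a x) (det_state S \<alpha>) = 0"
        using snoc.prems(2) v' by simp
    qed
    then show ?thesis by (simp add: lin_apply_sum_coef)
  qed
  have const: "lin_apply S (\<Psi> c y) r' = lin_apply S (\<Psi> 0 y) r'"
    if "c < snd b" "y < fst b" "ns_function S r'" for c y r'
    by (rule sum_choices_eq_0_imp_const[OF choices[OF _ that(3)] that(1,2)])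
  define M where "M = (\<lambda>a x. \<Sum>c<snd b. rs c 0 a x)"
  have "ns_function S M"
    unfolding M_def rs_def using b1 by (intro ns_function_sum ns_function_snoc_slice[OF snoc.prems(3)]) auto
  have "lin_apply (S@[b]) \<Phi> r = (\<Sum>c<snd b. \<Sum>y<fst b. lin_apply S (\<Psi> c y) (rs c y))"
    by (simp add: lin_apply_snoc \<Psi>_def rs_def)
  also have "\<dots> = (\<Sum>c<snd b. \<Sum>y<fst b. lin_apply S (\<Psi> 0 y) (rs c y))"
    unfolding rs_def by (intro sum.cong refl const ns_function_snoc_slice[OF snoc.prems(3)]) auto
  also have "\<dots> = (\<Sum>y<fst b. \<Sum>c<snd b. lin_apply S (\<Psi> 0 y) (rs c y))"
    by (rule sum.swap)
  also have "\<dots> = (\<Sum>y<fst b. lin_apply S (\<Psi> 0 y) M)"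
  proof (intro sum.cong refl)
    fix y assume "y \<in> {..<fst b}"
    then have "(\<lambda>a x. \<Sum>c<snd b. rs c y a x) = M"
      unfolding M_def rs_def using b1 by (intro ns_function_snoc_marginal[OF snoc.prems(3)]) auto
    then show "(\<Sum>c<snd b. lin_apply S (\<Psi> 0 y) (rs c y)) = lin_apply S (\<Psi> 0 y) M"
      by (metis lin_apply_sum_state)
  qed
  also have "\<dots> = 0" using choices[OF _ \<open>ns_function S M\<close>, of "\<lambda>_. 0"] b1 by simp
  finally show ?case .
qed

section \<open>Coordinate measurements\<close>

definition strategy_upd :: "(nat \<Rightarrow> nat \<Rightarrow> nat) \<Rightarrow> nat \<Rightarrow> nat \<Rightarrow> nat \<Rightarrow> nat \<Rightarrow> nat \<Rightarrow> nat" where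
  "strategy_upd \<alpha> i y v = \<alpha>(i := (\<alpha> i)(y := v))"

lemma strategy_upd_apply: "strategy_upd \<alpha> i y v j z = (if j = i \<and> z = y then v else \<alpha> j z)"
  by (simp add: strategy_upd_def)

lemma det_output_cong: "(\<And>j. j < length x \<Longrightarrow> \<alpha> j (x!j) = \<beta> j (x!j)) \<Longrightarrow> det_output \<alpha> x = det_output \<beta> x"
  by (simp add: det_output_def)

lemma valid_strategy_upd: "valid_strategy S \<alpha> \<Longrightarrow> i < length S \<Longrightarrow> v < snd (S!i) \<Longrightarrow> valid_strategy S (strategy_upd \<alpha> i y v)"
  by (auto simp: valid_strategy_def strategy_upd_apply)

definition det_value :: "box list \<Rightarrow> (nat list \<Rightarrow> nat list \<Rightarrow> real) \<Rightarrow> (nat \<Rightarrow> nat \<Rightarrow> nat) \<Rightarrow> real" where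
  "det_value S C \<alpha> = (\<Sum>x\<in>inputs S. C (det_output \<alpha> x) x)"

lemma det_value_upd_swap:
  assumes i: "i < length S" and y: "y \<noteq> x0!i" and x0: "x0 \<in> inputs S"
  shows "det_value S C \<alpha> - det_value S C (strategy_upd \<alpha> i y v)
       = det_value S C (strategy_upd \<alpha> i (x0!i) w) - det_value S C (strategy_upd (strategy_upd \<alpha> i y v) i (x0!i) w)"
proof -
  have "C (det_output \<alpha> x) x - C (det_output (strategy_upd \<alpha> i y v) x) x
      = C (det_output (strategy_upd \<alpha> i (x0!i) w) x) x - C (det_output (strategy_upd (strategy_upd \<alpha> i y v) i (x0!i) w) x) x"
    if x: "x \<in> inputs S" for x
  proof (cases "x!i = y")
    case True
    have "det_output \<alpha> x = det_output (strategy_upd \<alpha> i (x0!i) w) x" using True y by (intro det_output_cong) (auto simp: strategy_upd_apply)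
    moreover have "det_output (strategy_upd \<alpha> i y v) x = det_output (strategy_upd (strategy_upd \<alpha> i y v) i (x0!i) w) x"
      using True y by (intro det_output_cong) (auto simp: strategy_upd_apply)
    ultimately show ?thesis by simp
  next
    case False
    have "det_output \<alpha> x = det_output (strategy_upd \<alpha> i y v) x" using False by (intro det_output_cong) (auto simp: strategy_upd_apply)
    moreover have "det_output (strategy_upd \<alpha> i (x0!i) w) x = det_output (strategy_upd (strategy_upd \<alpha> i y v) i (x0!i) w) x"
      using False by (intro det_output_cong) (auto simp: strategy_upd_apply)
    ultimately show ?thesis by simp
  qed
  then show ?thesis unfolding det_value_def by (simp add: sum_subtractf[symmetric] cong: sum.cong)
qed

lemma lin_apply_det_state: "valid_strategy S \<alpha> \<Longrightarrow> lin_apply S C (det_state S \<alpha>) = det_value S C \<alpha>"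
  by (simp add: lin_apply_det_state_sum det_value_def)

lemma det_state_at: "a0 \<in> outputs S \<Longrightarrow> x0 \<in> inputs S \<Longrightarrow> det_state S \<alpha> a0 x0 = (if a0 = det_output \<alpha> x0 then 1 else 0)"
  by (simp add: det_state_def)

text \<open>Changing the answer of box i at an input y other than x0!i changes the value by as much as it
  does for strategies answering some w \<noteq> a0!i at x0!i, and those have value 0.\<close>

lemma det_value_upd_eq:
  assumes vS: "valid_sys S" and va: "valid_strategy S \<alpha>" and x0: "x0 \<in> inputs S" and a0: "a0 \<in> outputs S"
    and ma: "a0 = det_output \<alpha> x0"
    and i: "i < length S" and y: "y \<noteq> x0!i" and v: "v < snd (S!i)"
    and bounds: "\<forall>\<alpha>. valid_strategy S \<alpha> \<longrightarrow> 0 \<le> det_value S C \<alpha> \<and> det_value S C \<alpha> \<le> (if a0 = det_output \<alpha> x0 then 1 else 0)"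
  shows "det_value S C (strategy_upd \<alpha> i y v) = det_value S C \<alpha>"
proof (cases "y < fst (S!i)")
  case False
  have "det_output (strategy_upd \<alpha> i y v) x = det_output \<alpha> x" if x: "x \<in> inputs S" for x
  proof (rule det_output_cong)
    fix j assume "j < length x"
    then show "strategy_upd \<alpha> i y v j (x!j) = \<alpha> j (x!j)" using x False by (auto simp: strategy_upd_apply inputs_def)
  qed
  then show ?thesis unfolding det_value_def by (intro sum.cong refl) simp
next
  case True
  show ?thesis
  proof (cases "snd (S!i) = 1")
    case True': True
    have "\<alpha> i y < snd (S!i)" using va i \<open>y < fst (S!i)\<close> by (simp add: valid_strategy_def)
    then have "strategy_upd \<alpha> i y v = \<alpha>" using v True' by (auto simp: strategy_upd_def fun_eq_iff)
    then show ?thesis by simp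
  next
    case False
    have sn: "2 \<le> snd (S!i)" using False valid_sys_nth[OF vS i] by linarith
    define w where "w = (if a0!i = 0 then 1 else 0::nat)"
    have w: "w < snd (S!i)" "w \<noteq> a0!i" using sn by (auto simp: w_def)
    have li: "i < length x0" using x0 i by (simp add: inputs_def)
    have nm: "det_value S C \<beta> = 0" if vb: "valid_strategy S \<beta>" and bw: "\<beta> i (x0!i) = w" for \<beta>
    proof -
      have "a0 \<noteq> det_output \<beta> x0"
      proof
        assume "a0 = det_output \<beta> x0"
        then have "a0!i = \<beta> i (x0!i)" using li by simp
        then show False using w bw by simp
      qed
      then show ?thesis using bounds vb by force
    qed
    have v1: "valid_strategy S (strategy_upd \<alpha> i (x0!i) w)" using valid_strategy_upd[OF va i w(1)] .
    have v2: "valid_strategy S (strategy_upd (strategy_upd \<alpha> i y v) i (x0!i) w)" using valid_strategy_upd[OF valid_strategy_upd[OF va i v] i w(1)] .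
    have "det_value S C \<alpha> - det_value S C (strategy_upd \<alpha> i y v)
       = det_value S C (strategy_upd \<alpha> i (x0!i) w) - det_value S C (strategy_upd (strategy_upd \<alpha> i y v) i (x0!i) w)"
      by (rule det_value_upd_swap[OF i y x0])
    also have "\<dots> = 0" using nm[OF v1] nm[OF v2] by (simp add: strategy_upd_apply)
    finally show ?thesis by simp
  qed
qed

definition strategy_diff :: "box list \<Rightarrow> (nat \<Rightarrow> nat \<Rightarrow> nat) \<Rightarrow> (nat \<Rightarrow> nat \<Rightarrow> nat) \<Rightarrow> (nat \<times> nat) set" where
  "strategy_diff S \<alpha> \<beta> = {(i,y). i < length S \<and> y < fst (S!i) \<and> \<alpha> i y \<noteq> \<beta> i y}"

lemma finite_strategy_diff: "finite (strategy_diff S \<alpha> \<beta>)"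
proof -
  have "strategy_diff S \<alpha> \<beta> \<subseteq> Sigma {..<length S} (\<lambda>i. {..<fst (S!i)})" by (auto simp: strategy_diff_def)
  then show ?thesis by (rule finite_subset) auto
qed

lemma det_value_eq_if_same_output:
  assumes vS: "valid_sys S" and x0: "x0 \<in> inputs S" and a0: "a0 \<in> outputs S"
    and bounds: "\<forall>\<alpha>. valid_strategy S \<alpha> \<longrightarrow> 0 \<le> det_value S C \<alpha> \<and> det_value S C \<alpha> \<le> (if a0 = det_output \<alpha> x0 then 1 else 0)"
    and v0: "valid_strategy S \<alpha>0" and m0: "a0 = det_output \<alpha>0 x0"
    and va: "valid_strategy S \<alpha>" and ma: "a0 = det_output \<alpha> x0"
  shows "det_value S C \<alpha> = det_value S C \<alpha>0"
  using va ma
proof (induction "card (strategy_diff S \<alpha> \<alpha>0)" arbitrary: \<alpha>)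
  case 0
  then have D: "strategy_diff S \<alpha> \<alpha>0 = {}" using finite_strategy_diff by simp
  have "det_output \<alpha> x = det_output \<alpha>0 x" if x: "x \<in> inputs S" for x
  proof (rule det_output_cong)
    fix j assume "j < length x"
    then have "j < length S" "x!j < fst (S!j)" using x by (auto simp: inputs_def)
    then show "\<alpha> j (x!j) = \<alpha>0 j (x!j)" using D unfolding strategy_diff_def by blast
  qed
  then show ?case unfolding det_value_def by (intro sum.cong refl) simp
next
  case (Suc m)
  then obtain i y where iy: "(i,y) \<in> strategy_diff S \<alpha> \<alpha>0"
    by (metis card.empty ex_in_conv nat.distinct(1) prod.exhaust)
  then have i: "i < length S" and yf: "y < fst (S!i)" and ne: "\<alpha> i y \<noteq> \<alpha>0 i y"
    by (auto simp: strategy_diff_def)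
  have "i < length x0" using x0 i by (simp add: inputs_def)
  then have "\<alpha> i (x0!i) = \<alpha>0 i (x0!i)" using Suc.prems(2) m0 by (metis nth_det_output)
  then have y: "y \<noteq> x0!i" using ne by auto
  have v: "\<alpha>0 i y < snd (S!i)" using v0 i yf by (simp add: valid_strategy_def)
  define \<alpha>2 where "\<alpha>2 = strategy_upd \<alpha> i y (\<alpha>0 i y)"
  have "strategy_diff S \<alpha>2 \<alpha>0 = strategy_diff S \<alpha> \<alpha>0 - {(i,y)}"
    by (auto simp: strategy_diff_def \<alpha>2_def strategy_upd_apply)
  then have "m = card (strategy_diff S \<alpha>2 \<alpha>0)" using Suc.hyps(2) iy finite_strategy_diff by simp
  moreover have "valid_strategy S \<alpha>2" unfolding \<alpha>2_def by (rule valid_strategy_upd[OF Suc.prems(1) i v])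
  moreover have "a0 = det_output \<alpha>2 x0"
    unfolding Suc.prems(2) \<alpha>2_def using y by (intro det_output_cong) (auto simp: strategy_upd_apply)
  ultimately have "det_value S C \<alpha>2 = det_value S C \<alpha>0" by (rule Suc.hyps(1))
  moreover have "det_value S C \<alpha>2 = det_value S C \<alpha>"
    unfolding \<alpha>2_def by (rule det_value_upd_eq[OF vS Suc.prems(1) x0 a0 Suc.prems(2) i y v bounds])
  ultimately show ?case by simp
qed

lemma det_value_proportional:
  assumes vS: "valid_sys S" and x0: "x0 \<in> inputs S" and a0: "a0 \<in> outputs S"
    and bounds: "\<forall>\<alpha>. valid_strategy S \<alpha> \<longrightarrow> 0 \<le> det_value S C \<alpha> \<and> det_value S C \<alpha> \<le> (if a0 = det_output \<alpha> x0 then 1 else 0)"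
  shows "\<exists>t. \<forall>\<alpha>. valid_strategy S \<alpha> \<longrightarrow> det_value S C \<alpha> = t * (if a0 = det_output \<alpha> x0 then 1 else 0)"
proof (cases "\<exists>\<alpha>0. valid_strategy S \<alpha>0 \<and> a0 = det_output \<alpha>0 x0")
  case False
  then have "\<forall>\<alpha>. valid_strategy S \<alpha> \<longrightarrow> det_value S C \<alpha> = 0 * (if a0 = det_output \<alpha> x0 then 1 else 0)"
    using bounds by force
  then show ?thesis by blast
next
  case True
  then obtain \<alpha>0 where v0: "valid_strategy S \<alpha>0" and m0: "a0 = det_output \<alpha>0 x0" by blast
  have "det_value S C \<alpha> = det_value S C \<alpha>0 * (if a0 = det_output \<alpha> x0 then 1 else 0)"
    if va: "valid_strategy S \<alpha>" for \<alpha>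
  proof (cases "a0 = det_output \<alpha> x0")
    case True
    then show ?thesis using det_value_eq_if_same_output[OF vS x0 a0 bounds v0 m0 va] by simp
  next
    case False
    then show ?thesis using bounds va by force
  qed
  then show ?thesis by blast
qed

text \<open>Outcome labels of measurements are natural numbers, so pairs (output, input) are encoded
  with to_nat.\<close>

definition coord_meas :: "nat \<Rightarrow> nat list \<Rightarrow> nat list \<Rightarrow> real" where
  "coord_meas r = coord_effect (fst (from_nat r :: nat list \<times> nat list)) (snd (from_nat r :: nat list \<times> nat list))"

lemma coord_meas_to_nat: "coord_meas (to_nat k) = coord_effect (fst k) (snd k)"
  by (simp add: coord_meas_def)

lemma lin_apply_dominated_by_coord:
  assumes vS: "valid_sys S" and a0: "a0 \<in> outputs S" and x0: "x0 \<in> inputs S"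
    and dom: "\<And>p. is_state S p \<Longrightarrow> 0 \<le> lin_apply S C p \<and> lin_apply S C p \<le> p a0 x0"
  shows "\<exists>t. \<forall>p. is_state S p \<longrightarrow> lin_apply S C p = t * p a0 x0"
proof -
  have "\<forall>\<alpha>. valid_strategy S \<alpha> \<longrightarrow> 0 \<le> det_value S C \<alpha> \<and> det_value S C \<alpha> \<le> (if a0 = det_output \<alpha> x0 then 1 else 0)"
    using dom[OF det_state_is_state] by (simp add: lin_apply_det_state det_state_at[OF a0 x0])
  then obtain t where t: "\<forall>\<alpha>. valid_strategy S \<alpha> \<longrightarrow> det_value S C \<alpha> = t * (if a0 = det_output \<alpha> x0 then 1 else 0)"
    using det_value_proportional[OF vS x0 a0] by blast
  have "lin_apply S C p = t * p a0 x0" if st: "is_state S p" for p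
  proof -
    have "lin_apply S (\<lambda>a x. C a x - t * coord_effect a0 x0 a x) p = 0"
    proof (rule det_states_span_ns_functions[OF vS _ state_ns_function[OF st]], intro allI impI)
      fix \<alpha> assume "valid_strategy S \<alpha>"
      then show "lin_apply S (\<lambda>a x. C a x - t * coord_effect a0 x0 a x) (det_state S \<alpha>) = 0"
        using t by (simp add: lin_apply_diff_coef lin_apply_scale_coef lin_apply_coord_effect[OF a0 x0]
            lin_apply_det_state det_state_at[OF a0 x0])
    qed
    then show ?thesis by (simp add: lin_apply_diff_coef lin_apply_scale_coef lin_apply_coord_effect[OF a0 x0])
  qed
  then show ?thesis by blast
qed

text \<open>The sum is one on every deterministic state, hence on all states.\<close>

lemma sum_coords_eq_1:
  assumes vS: "valid_sys S" and Kfin: "finite K" and Ksub: "K \<subseteq> outputs S \<times> inputs S"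
    and wire: "\<forall>\<alpha>. valid_strategy S \<alpha> \<longrightarrow> card {k\<in>K. fst k = det_output \<alpha> (snd k)} = 1"
    and st: "is_state S p"
  shows "(\<Sum>k\<in>K. p (fst k) (snd k)) = 1"
proof -
  define z where "z = replicate (length S) (0::nat)"
  have z: "z \<in> inputs S" unfolding z_def by (rule zero_input_in_inputs[OF vS])
  define \<Phi> where "\<Phi> = (\<lambda>a x. (\<Sum>k\<in>K. coord_effect (fst k) (snd k) a x) - norm_effect z a x)"
  have lin: "lin_apply S \<Phi> q = (\<Sum>k\<in>K. q (fst k) (snd k)) - (\<Sum>a\<in>outputs S. q a z)" for q
    unfolding \<Phi>_def lin_apply_diff_coef lin_apply_sum_coef lin_apply_norm_effect[OF z]
    using Ksub by (intro arg_cong2[where f="(-)"] sum.cong refl lin_apply_coord_effect) auto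
  have "lin_apply S \<Phi> p = 0"
  proof (rule det_states_span_ns_functions[OF vS _ state_ns_function[OF st]], intro allI impI)
    fix \<alpha> assume va: "valid_strategy S \<alpha>"
    have "(\<Sum>k\<in>K. det_state S \<alpha> (fst k) (snd k)) = (\<Sum>k\<in>K. if fst k = det_output \<alpha> (snd k) then 1 else 0)"
      using Ksub by (intro sum.cong refl) (auto simp: det_state_at)
    also have "\<dots> = 1" using Kfin wire va by (simp add: sum.inter_filter[symmetric])
    finally show "lin_apply S \<Phi> (det_state S \<alpha>) = 0" by (simp add: lin det_state_norm[OF va z])
  qed
  then show ?thesis by (simp add: lin state_norm[OF st z])
qed

lemma maximally_informative_coord_meas:
  assumes vS: "valid_sys S" and Kfin: "finite K" and Ksub: "K \<subseteq> outputs S \<times> inputs S"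
    and wire: "\<forall>\<alpha>. valid_strategy S \<alpha> \<longrightarrow> card {k\<in>K. fst k = det_output \<alpha> (snd k)} = 1"
  shows "maximally_informative S (to_nat ` K) coord_meas"
proof -
  have injK: "inj_on to_nat K" by (meson inj_on_subset inj_to_nat subset_UNIV)
  have val: "lin_apply S (coord_meas (to_nat k)) p = p (fst k) (snd k)" if "k \<in> K" for k p
    using that Ksub by (auto simp: coord_meas_to_nat intro!: lin_apply_coord_effect)
  have meas: "is_measurement S (to_nat ` K) coord_meas"
    unfolding is_measurement_def
  proof (intro conjI allI impI ballI)
    show "finite (to_nat ` K)" using Kfin by simp
  next
    fix r assume "r \<in> to_nat ` K"
    then show "is_effect S (coord_meas r)" unfolding is_effect_def
      using val by (auto simp: state_nonneg state_le_1)
  next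
    fix p assume "is_state S p"
    then show "(\<Sum>r\<in>to_nat ` K. lin_apply S (coord_meas r) p) = 1"
      using sum_coords_eq_1[OF vS Kfin Ksub wire] by (simp add: sum.reindex[OF injK] val)
  qed
  show ?thesis unfolding maximally_informative_def
  proof (intro conjI meas allI impI)
    fix R' \<nu> f assume "is_measurement S R' \<nu> \<and> refines_via S R' \<nu> f (to_nat ` K) coord_meas"
    then have M: "is_measurement S R' \<nu>" and ref: "refines_via S R' \<nu> f (to_nat ` K) coord_meas" by auto
    show "trivial_refinement S R' \<nu> f coord_meas" unfolding trivial_refinement_def
    proof
      fix s assume s: "s \<in> R'"
      have "f s \<in> to_nat ` K" using ref s unfolding refines_via_def by blast
      then obtain a0 x0 where k: "(a0, x0) \<in> K" and fs: "f s = to_nat (a0, x0)" by auto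
      have "\<exists>t. \<forall>p. is_state S p \<longrightarrow> lin_apply S (\<nu> s) p = t * p a0 x0"
        using k Ksub refinement_le[OF M ref s] val[OF k]
        by (intro lin_apply_dominated_by_coord[OF vS]) (auto simp: fs)
      then show "\<exists>t. \<forall>p. is_state S p \<longrightarrow> lin_apply S (\<nu> s) p = t * lin_apply S (coord_meas (f s)) p"
        using val[OF k] by (simp add: fs)
    qed
  qed
qed

section \<open>Entropy\<close>

lemma ent_term_nonneg: "0 \<le> q \<Longrightarrow> q \<le> 1 \<Longrightarrow> 0 \<le> ent_term q"
  by (auto simp: ent_term_def mult_nonneg_nonpos log_le_zero_cancel_iff)

lemma ent_term_zero[simp]: "ent_term 0 = 0" by (simp add: ent_term_def)

lemma ent_term_mult:
  assumes "0 \<le> P" "0 \<le> s"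
  shows "ent_term (P * s) = s * ent_term P + P * ent_term s"
proof (cases "P = 0 \<or> s = 0")
  case True then show ?thesis using assms by (auto simp: ent_term_def)
next
  case False
  then have P: "P > 0" and s: "s > 0" using assms by auto
  then have ps: "\<not> P * s \<le> 0" "\<not> P \<le> 0" "\<not> s \<le> 0" by (auto simp: not_le)
  show ?thesis unfolding ent_term_def using ps P s by (simp add: log_mult algebra_simps)
qed

lemma ent_term_ge_log: 
  assumes "0 \<le> x" "x \<le> y"
  shows "x * (- log 2 y) \<le> ent_term x"
proof (cases "x = 0")
  case True then show ?thesis by simp
next
  case False
  then have x: "x > 0" using assms by auto
  then have "log 2 x \<le> log 2 y" using assms by simp
  then show ?thesis using x by (simp add: ent_term_def mult_left_mono)
qed

lemma ent_term_sum_le: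
  assumes "finite G" "\<And>r. r \<in> G \<Longrightarrow> 0 \<le> x r"
  shows "ent_term (\<Sum>r\<in>G. x r) \<le> (\<Sum>r\<in>G. ent_term (x r))"
proof (cases "(\<Sum>r\<in>G. x r) = 0")
  case True
  then have "\<forall>r\<in>G. x r = 0" using assms sum_nonneg_eq_0_iff by blast
  then show ?thesis using True by simp
next
  case False
  define X where "X = (\<Sum>r\<in>G. x r)"
  have X: "X > 0" using False assms by (simp add: X_def sum_nonneg order_less_le)
  have le: "x r \<le> X" if "r \<in> G" for r
    unfolding X_def using assms that by (intro member_le_sum) auto
  have "ent_term X = (\<Sum>r\<in>G. x r) * (- log 2 X)" using X by (simp add: ent_term_def X_def)
  also have "\<dots> = (\<Sum>r\<in>G. x r * (- log 2 X))" by (rule sum_distrib_right)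
  also have "\<dots> \<le> (\<Sum>r\<in>G. ent_term (x r))"
    using assms le by (intro sum_mono ent_term_ge_log) auto
  finally show ?thesis by (simp add: X_def)
qed

lemma ent_term_scale_ge:
  assumes "0 \<le> w" "w \<le> 1" "0 \<le> q"
  shows "w * ent_term q \<le> ent_term (w * q)"
proof (cases "w = 0 \<or> q = 0")
  case True then show ?thesis using assms by (auto simp: ent_term_def)
next
  case False
  then have w: "w > 0" and q: "q > 0" using assms by auto
  have "log 2 w \<le> 0" using w assms by simp
  then have "0 \<le> w * q * (- log 2 w)" using w q by (intro mult_nonneg_nonneg) auto
  moreover have "\<not> w * q \<le> 0" "\<not> q \<le> 0" using w q by (auto simp: not_le)
  ultimately show ?thesis using w q unfolding ent_term_def by (simp add: log_mult algebra_simps)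
qed

lemma ent_term_sum_grouped_le:
  assumes R: "finite R" and T: "finite T" and g: "\<forall>r\<in>R. g r \<in> T"
    and lam: "\<forall>r\<in>R. 0 \<le> lam r" and e: "\<forall>t. 0 \<le> e t"
  shows "(\<Sum>t\<in>T. ent_term ((\<Sum>r\<in>{r\<in>R. g r = t}. lam r) * e t)) \<le> (\<Sum>r\<in>R. ent_term (lam r * e (g r)))"
proof -
  have "(\<Sum>t\<in>T. ent_term ((\<Sum>r\<in>{r\<in>R. g r = t}. lam r) * e t))
      \<le> (\<Sum>t\<in>T. \<Sum>r\<in>{r\<in>R. g r = t}. ent_term (lam r * e t))"
    unfolding sum_distrib_right using R lam e by (intro sum_mono ent_term_sum_le) auto
  also have "\<dots> = (\<Sum>t\<in>T. \<Sum>r\<in>{r\<in>R. g r = t}. ent_term (lam r * e (g r)))"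
    by (intro sum.cong refl) auto
  also have "\<dots> = (\<Sum>r\<in>R. ent_term (lam r * e (g r)))"
    using R T g by (intro sum.group) auto
  finally show ?thesis .
qed

lemma mixture_entropy_ge:
  fixes W :: "nat \<Rightarrow> nat \<Rightarrow> real"
  assumes Wnn: "\<forall>c<K. \<forall>x<m. 0 \<le> W c x" and Wsum: "\<forall>c<K. (\<Sum>x<m. W c x) = 1"
    and Pnn: "\<forall>c<K. 0 \<le> P c" and snn: "\<forall>c<K. \<forall>x<m. \<forall>a<n. 0 \<le> s c x a"
    and ssum: "\<forall>c<K. \<forall>x<m. (\<Sum>a<n. s c x a) = 1"
    and Lb: "\<forall>c<K. \<forall>x<m. L c \<le> (\<Sum>a<n. ent_term (s c x a))"
  shows "(\<Sum>c<K. ent_term (P c) + P c * L c) \<le> (\<Sum>c<K. \<Sum>x<m. \<Sum>a<n. W c x * ent_term (P c * s c x a))"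
proof -
  have "(\<Sum>c<K. ent_term (P c) + P c * L c) = (\<Sum>c<K. \<Sum>x<m. W c x * (ent_term (P c) + P c * L c))"
  proof (intro sum.cong refl)
    fix c assume "c \<in> {..<K}"
    then show "ent_term (P c) + P c * L c = (\<Sum>x<m. W c x * (ent_term (P c) + P c * L c))"
      using Wsum by (simp add: sum_distrib_right[symmetric])
  qed
  also have "\<dots> \<le> (\<Sum>c<K. \<Sum>x<m. W c x * (ent_term (P c) + P c * (\<Sum>a<n. ent_term (s c x a))))"
    using Wnn Pnn Lb by (intro sum_mono mult_left_mono add_left_mono) auto
  also have "\<dots> = (\<Sum>c<K. \<Sum>x<m. \<Sum>a<n. W c x * ent_term (P c * s c x a))"
  proof (intro sum.cong refl)
    fix c x assume c: "c \<in> {..<K}" and x: "x \<in> {..<m}"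
    have "(\<Sum>a<n. ent_term (P c * s c x a)) = (\<Sum>a<n. s c x a) * ent_term (P c) + P c * (\<Sum>a<n. ent_term (s c x a))"
      using Pnn snn c x by (simp add: ent_term_mult sum.distrib sum_distrib_left sum_distrib_right)
    then show "W c x * (ent_term (P c) + P c * (\<Sum>a<n. ent_term (s c x a))) = (\<Sum>a<n. W c x * ent_term (P c * s c x a))"
      using ssum c x by (simp add: sum_distrib_left[symmetric])
  qed
  finally show ?thesis .
qed

lemma meas_entropy_le:
  assumes st: "is_state S p" and MI: "maximally_informative S R \<mu>"
  shows "meas_entropy S p \<le> (\<Sum>r\<in>R. ent_term (lin_apply S (\<mu> r) p))"
  unfolding meas_entropy_def
proof (rule cInf_lower)
  show "(\<Sum>r\<in>R. ent_term (lin_apply S (\<mu> r) p)) \<in> {\<Sum>r\<in>R. ent_term (lin_apply S (\<mu> r) p) |R \<mu>. maximally_informative S R \<mu>}"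
    using MI by blast
  show "bdd_below {\<Sum>r\<in>R. ent_term (lin_apply S (\<mu> r) p) |R \<mu>. maximally_informative S R \<mu>}"
  proof (rule bdd_belowI[of _ 0], clarify)
    fix R' \<mu>' assume "maximally_informative S R' \<mu>'"
    then have meas: "is_measurement S R' \<mu>'" by (simp add: maximally_informative_def)
    show "0 \<le> (\<Sum>r\<in>R'. ent_term (lin_apply S (\<mu>' r) p))"
      using effect_bounds[OF measurement_effect[OF meas] st] by (intro sum_nonneg ent_term_nonneg) auto
  qed
qed

lemma meas_entropy_ge:
  assumes ex: "maximally_informative S R0 \<mu>0"
    and lb: "\<And>R \<mu>. maximally_informative S R \<mu> \<Longrightarrow> L \<le> (\<Sum>r\<in>R. ent_term (lin_apply S (\<mu> r) p))"
  shows "L \<le> meas_entropy S p"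
  unfolding meas_entropy_def
  by (rule cInf_greatest) (use ex lb in auto)

definition spread_entropy :: "real \<Rightarrow> nat \<Rightarrow> real" where
  "spread_entropy t N = ent_term (1 - t) + real N * ent_term (t / real N)"

lemma spread_entropy_eq:
  assumes "0 \<le> t" "t \<le> 1" "1 \<le> N"
  shows "spread_entropy t N = ent_term (1 - t) + ent_term t + t * log 2 N"
proof (cases "t = 0")
  case True then show ?thesis by (simp add: spread_entropy_def)
next
  case False
  then have t: "t > 0" using assms by simp
  have N: "real N > 0" using assms by simp
  have tn: "\<not> t / real N \<le> 0" using t N by (simp add: not_le)
  have "real N * ent_term (t / real N) = - t * log 2 (t / real N)"
    using t N tn by (simp add: ent_term_def)
  also have "\<dots> = ent_term t + t * log 2 N"
    using t N by (simp add: ent_term_def log_divide algebra_simps)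
  finally show ?thesis by (simp add: spread_entropy_def)
qed

lemma spread_entropy_mono:
  assumes "0 \<le> t" "t \<le> 1/2" "1 \<le> N"
  shows "spread_entropy t N \<le> spread_entropy (1 - t) N"
proof -
  have "log 2 N \<ge> 0" using assms by simp
  then have "t * log 2 N \<le> (1 - t) * log 2 N" using assms by (intro mult_right_mono) auto
  then show ?thesis using assms by (simp add: spread_entropy_eq)
qed

lemma spread_entropy_power2: "0 \<le> t \<Longrightarrow> t \<le> 1 \<Longrightarrow> spread_entropy t (2^k) = ent_term (1 - t) + ent_term t + t * real k"
  using spread_entropy_eq[of t "2^k"] by (simp add: log_nat_power)

lemma ent_term_div_tendsto: 
  assumes "0 \<le> a" shows "(\<lambda>n. ent_term (a / real n)) \<longlonglongrightarrow> 0"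
proof (cases "a = 0")
  case True then show ?thesis by simp
next
  case False
  then have a: "a > 0" using assms by simp
  have lim: "(\<lambda>n. (a / ln 2) * (ln (real n) / real n) - (a * ln a / ln 2) * (1 / real n)) \<longlonglongrightarrow> (a / ln 2) * 0 - (a * ln a / ln 2) * 0"
    by (intro tendsto_intros)
  have ev: "eventually (\<lambda>n. (a / ln 2) * (ln (real n) / real n) - (a * ln a / ln 2) * (1 / real n) = ent_term (a / real n)) sequentially"
  proof (rule eventually_sequentiallyI[of 1])
    fix n :: nat assume n: "1 \<le> n"
    then have np: "real n > 0" by simp
    have nl: "\<not> a / real n \<le> 0" using a np by (simp add: not_le)
    show "(a / ln 2) * (ln (real n) / real n) - (a * ln a / ln 2) * (1 / real n) = ent_term (a / real n)"
      using a np nl by (simp add: ent_term_def log_def ln_div field_simps)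
  qed
  show ?thesis using Lim_transform_eventually[OF lim ev] by simp
qed

lemma ent_term_one_minus_div_tendsto:
  assumes "0 \<le> a" shows "(\<lambda>n. ent_term (1 - a / real n)) \<longlonglongrightarrow> 0"
proof -
  have lim: "(\<lambda>n. - (1 - a / real n) * log 2 (1 - a / real n)) \<longlonglongrightarrow> - (1 - 0) * log 2 (1 - 0)"
    by (intro tendsto_intros) auto
  obtain N :: nat where N: "a < real N" using reals_Archimedean2 by blast
  have ev: "eventually (\<lambda>n. - (1 - a / real n) * log 2 (1 - a / real n) = ent_term (1 - a / real n)) sequentially"
  proof (rule eventually_sequentiallyI[of "Suc N"])
    fix n :: nat assume n: "Suc N \<le> n"
    then have np: "real n > a" "real n > 0" using N assms by linarith+
    then have "a / real n < 1" by simp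
    then have "\<not> 1 - a / real n \<le> 0" by simp
    then show "- (1 - a / real n) * log 2 (1 - a / real n) = ent_term (1 - a / real n)"
      by (simp add: ent_term_def)
  qed
  show ?thesis using Lim_transform_eventually[OF lim ev] by simp
qed

lemma ceiling_mult_div_tendsto:
  assumes "0 \<le> c" shows "(\<lambda>n. real (nat \<lceil>real n * c\<rceil>) / real n) \<longlonglongrightarrow> c"
proof (rule tendsto_sandwich[of "\<lambda>_. c" _ _ "\<lambda>n. c + 1 / real n"])
  show "eventually (\<lambda>n. c \<le> real (nat \<lceil>real n * c\<rceil>) / real n) sequentially"
  proof (rule eventually_sequentiallyI[of 1])
    fix n :: nat assume "1 \<le> n"
    then have np: "real n > 0" by simp
    have c0: "0 \<le> real n * c" using assms by simp
    then have "real (nat \<lceil>real n * c\<rceil>) = real_of_int \<lceil>real n * c\<rceil>" by simp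
    moreover have "real n * c \<le> real_of_int \<lceil>real n * c\<rceil>" by (rule le_of_int_ceiling)
    ultimately have "real n * c \<le> real (nat \<lceil>real n * c\<rceil>)" by simp
    then show "c \<le> real (nat \<lceil>real n * c\<rceil>) / real n" using np by (simp add: field_simps)
  qed
  show "eventually (\<lambda>n. real (nat \<lceil>real n * c\<rceil>) / real n \<le> c + 1 / real n) sequentially"
  proof (rule eventually_sequentiallyI[of 1])
    fix n :: nat assume "1 \<le> n"
    then have np: "real n > 0" by simp
    have c0: "0 \<le> real n * c" using assms by simp
    then have "real (nat \<lceil>real n * c\<rceil>) = real_of_int \<lceil>real n * c\<rceil>" by simp
    also have "\<dots> \<le> real n * c + 1" by (rule of_int_ceiling_le_add_one)
    finally show "real (nat \<lceil>real n * c\<rceil>) / real n \<le> c + 1 / real n" using np by (simp add: field_simps)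
  qed
  show "(\<lambda>_. c) \<longlonglongrightarrow> c" by simp
  have "(\<lambda>n. c + 1 / real n) \<longlonglongrightarrow> c + 0" by (intro tendsto_intros)
  then show "(\<lambda>n. c + 1 / real n) \<longlonglongrightarrow> c" by simp
qed

lemma spread_entropy_scaled_tendsto:
  assumes a: "0 < a" and c: "0 \<le> c"
  shows "(\<lambda>j. spread_entropy (a / real j) (2 ^ nat \<lceil>real j * c\<rceil>)) \<longlonglongrightarrow> a * c"
proof -
  have "(\<lambda>j. ent_term (1 - a / real j) + ent_term (a / real j) + a * (real (nat \<lceil>real j * c\<rceil>) / real j))
      \<longlonglongrightarrow> 0 + 0 + a * c"
    using a c by (intro tendsto_intros ent_term_one_minus_div_tendsto ent_term_div_tendsto ceiling_mult_div_tendsto) auto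
  moreover have "eventually (\<lambda>j. ent_term (1 - a / real j) + ent_term (a / real j) + a * (real (nat \<lceil>real j * c\<rceil>) / real j)
      = spread_entropy (a / real j) (2 ^ nat \<lceil>real j * c\<rceil>)) sequentially"
  proof -
    obtain N :: nat where N: "a < real N" using reals_Archimedean2 by blast
    show ?thesis
    proof (rule eventually_sequentiallyI[of "Suc N"])
      fix j :: nat assume "Suc N \<le> j"
      then have "a \<le> real j" "0 < real j" using N by linarith+
      then have "0 \<le> a / real j" "a / real j \<le> 1" using a by auto
      then show "ent_term (1 - a / real j) + ent_term (a / real j) + a * (real (nat \<lceil>real j * c\<rceil>) / real j)
          = spread_entropy (a / real j) (2 ^ nat \<lceil>real j * c\<rceil>)"
        by (simp add: spread_entropy_power2)
    qed
  qed
  ultimately show ?thesis by (simp add: Lim_transform_eventually)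
qed

section \<open>A box together with a classical box\<close>

text \<open>A box with m inputs and n outputs next to a classical box with K outputs. The cell (c, x, a)
  stands for the entry p [a, c] [x, 0] of a state p.\<close>

locale two_box =
  fixes m n K :: nat
  assumes m1: "1 \<le> m" and n1: "1 \<le> n" and K1: "1 \<le> K"
begin

abbreviation "S2 \<equiv> [(m,n),(Suc 0,K)]"

lemma valid_sys_S2: "valid_sys S2" using m1 n1 K1 by (simp add: valid_sys_def)

lemma outputs_S2_iff: "a \<in> outputs S2 \<longleftrightarrow> (\<exists>a0 c. a = [a0,c] \<and> a0 < n \<and> c < K)"
proof
  assume "a \<in> outputs S2"
  then have "length a = 2" by (simp add: outputs_def)
  then obtain a0 c where "a = [a0,c]" by (metis (no_types) One_nat_def length_0_conv length_Suc_conv numeral_2_eq_2)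
  with \<open>a \<in> outputs S2\<close> show "\<exists>a0 c. a = [a0,c] \<and> a0 < n \<and> c < K" by (simp add: outputs_Cons_iff)
qed (auto simp: outputs_Cons_iff)

lemma inputs_S2_iff: "x \<in> inputs S2 \<longleftrightarrow> (\<exists>x0. x = [x0,0] \<and> x0 < m)"
proof
  assume "x \<in> inputs S2"
  then have "length x = 2" by (simp add: inputs_def)
  then obtain x0 c where "x = [x0,c]" by (metis (no_types) One_nat_def length_0_conv length_Suc_conv numeral_2_eq_2)
  with \<open>x \<in> inputs S2\<close> show "\<exists>x0. x = [x0,0] \<and> x0 < m" by (simp add: inputs_Cons_iff)
qed (auto simp: inputs_Cons_iff)

lemma det_value_S2: "det_value S2 C \<alpha> = (\<Sum>x<m. C [\<alpha> 0 x, \<alpha> (Suc 0) 0] [x,0])"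
  by (simp add: det_value_def sum_inputs_Cons det_output_Cons2)

lemma valid_strategy_S2: "valid_strategy S2 \<alpha> \<longleftrightarrow> (\<forall>x<m. \<alpha> 0 x < n) \<and> \<alpha> (Suc 0) 0 < K"
  by (auto simp: valid_strategy_def All_less_Suc2 numeral_2_eq_2)

lemma det_state_S2: "a < n \<Longrightarrow> c < K \<Longrightarrow> x < m \<Longrightarrow> det_state S2 \<alpha> [a,c] [x,0] = (if a = \<alpha> 0 x \<and> c = \<alpha> (Suc 0) 0 then 1 else 0)"
  by (simp add: det_state_def outputs_Cons_iff inputs_Cons_iff det_output_Cons2)

text \<open>On states, every effect is a non-negative combination of entries: subtract from each
  coefficient its minimum over the output a and collect these minima at input 0. Both coefficient
  families give the same value on every deterministic state, which picks one a for each x.\<close>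

definition min_coef :: "(nat list \<Rightarrow> nat list \<Rightarrow> real) \<Rightarrow> nat \<Rightarrow> nat \<Rightarrow> real" where
  "min_coef C c x = Min ((\<lambda>a. C [a,c] [x,0]) ` {..<n})"
definition min_coef_sum :: "(nat list \<Rightarrow> nat list \<Rightarrow> real) \<Rightarrow> nat \<Rightarrow> real" where
  "min_coef_sum C c = (\<Sum>x<m. min_coef C c x)"
definition weight :: "(nat list \<Rightarrow> nat list \<Rightarrow> real) \<Rightarrow> nat \<Rightarrow> nat \<Rightarrow> nat \<Rightarrow> real" where
  "weight C c x a = C [a,c] [x,0] - min_coef C c x + (if x = 0 then min_coef_sum C c else 0)"

lemma min_coef_le: "a < n \<Longrightarrow> min_coef C c x \<le> C [a,c] [x,0]"
  unfolding min_coef_def by (rule Min_le) auto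

lemma min_coef_attained: "\<exists>a<n. C [a,c] [x,0] = min_coef C c x"
proof -
  have ne: "{..<n} \<noteq> {}" using n1 by (simp add: lessThan_empty_iff)
  have "min_coef C c x \<in> (\<lambda>a. C [a,c] [x,0]) ` {..<n}" unfolding min_coef_def using ne by (intro Min_in) auto
  then show ?thesis by auto
qed

lemma min_coef_sum_nonneg:
  assumes eff: "is_effect S2 C" and c: "c < K"
  shows "0 \<le> min_coef_sum C c"
proof -
  obtain f where f: "\<forall>x. f x < n \<and> C [f x,c] [x,0] = min_coef C c x"
    using min_coef_attained[of C c] by metis
  define \<alpha> :: "nat \<Rightarrow> nat \<Rightarrow> nat" where "\<alpha> = (\<lambda>i y. if i = 0 then f y else c)"
  have "(\<forall>x<m. \<alpha> 0 x < n) \<and> \<alpha> (Suc 0) 0 < K" using f c by (simp add: \<alpha>_def)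
  then have va: "valid_strategy S2 \<alpha>" using valid_strategy_S2 by blast
  have "det_value S2 C \<alpha> = min_coef_sum C c" by (simp add: det_value_S2 \<alpha>_def f min_coef_sum_def)
  moreover have "0 \<le> lin_apply S2 C (det_state S2 \<alpha>)"
    using effect_bounds[OF eff det_state_is_state[OF va]] by simp
  ultimately show ?thesis by (simp add: lin_apply_det_state[OF va])
qed

lemma weight_nonneg: "is_effect S2 C \<Longrightarrow> c < K \<Longrightarrow> a < n \<Longrightarrow> 0 \<le> weight C c x a"
  using min_coef_le[of a C c x] min_coef_sum_nonneg[of C c] by (simp add: weight_def)

lemma lin_apply_S2_weights:
  assumes st: "is_state S2 q"
  shows "lin_apply S2 C q = (\<Sum>c<K. \<Sum>x<m. \<Sum>a<n. weight C c x a * q [a,c] [x,0])"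
proof -
  define \<Phi> where "\<Phi> = (\<lambda>a' x'. C a' x' - (\<Sum>c<K. \<Sum>x<m. \<Sum>a<n. weight C c x a * coord_effect [a,c] [x,0] a' x'))"
  have cl: "lin_apply S2 (\<lambda>a' x'. \<Sum>c<K. \<Sum>x<m. \<Sum>a<n. weight C c x a * coord_effect [a,c] [x,0] a' x') r
        = (\<Sum>c<K. \<Sum>x<m. \<Sum>a<n. weight C c x a * r [a,c] [x,0])" for r
    by (simp add: lin_apply_sum_coef lin_apply_scale_coef lin_apply_coord_effect outputs_Cons_iff inputs_Cons_iff)
  have "lin_apply S2 \<Phi> q = 0"
  proof (rule det_states_span_ns_functions[OF valid_sys_S2 _ state_ns_function[OF st]], intro allI impI)
    fix \<alpha> assume va: "valid_strategy S2 \<alpha>"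
    have a0: "\<forall>x<m. \<alpha> 0 x < n" and a1: "\<alpha> (Suc 0) 0 < K" using va valid_strategy_S2 by blast+
    have "(\<Sum>c<K. \<Sum>x<m. \<Sum>a<n. weight C c x a * det_state S2 \<alpha> [a,c] [x,0])
        = (\<Sum>c<K. \<Sum>x<m. if c = \<alpha> (Suc 0) 0 then weight C c x (\<alpha> 0 x) else 0)"
    proof (intro sum.cong refl)
      fix c x assume c: "c \<in> {..<K}" and x: "x \<in> {..<m}"
      have "(\<Sum>a<n. weight C c x a * det_state S2 \<alpha> [a,c] [x,0]) = (\<Sum>a<n. if a = \<alpha> 0 x then (if c = \<alpha> (Suc 0) 0 then weight C c x a else 0) else 0)"
        using c x by (intro sum.cong refl) (auto simp: det_state_S2)
      also have "\<dots> = (if c = \<alpha> (Suc 0) 0 then weight C c x (\<alpha> 0 x) else 0)" using a0 x by (simp add: sum.delta')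
      finally show "(\<Sum>a<n. weight C c x a * det_state S2 \<alpha> [a,c] [x,0]) = (if c = \<alpha> (Suc 0) 0 then weight C c x (\<alpha> 0 x) else 0)" .
    qed
    also have "\<dots> = (\<Sum>c<K. if c = \<alpha> (Suc 0) 0 then (\<Sum>x<m. weight C c x (\<alpha> 0 x)) else 0)"
      by (intro sum.cong refl) auto
    also have "\<dots> = (\<Sum>x<m. weight C (\<alpha> (Suc 0) 0) x (\<alpha> 0 x))" using a1 by (simp add: sum.delta')
    also have "\<dots> = (\<Sum>x<m. C [\<alpha> 0 x, \<alpha> (Suc 0) 0] [x,0] - min_coef C (\<alpha> (Suc 0) 0) x) + (\<Sum>x<m. if x = 0 then min_coef_sum C (\<alpha> (Suc 0) 0) else 0)"
      by (simp add: weight_def sum.distrib)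
    also have "(\<Sum>x<m. if x = 0 then min_coef_sum C (\<alpha> (Suc 0) 0) else 0) = min_coef_sum C (\<alpha> (Suc 0) 0)" using m1 by (simp add: sum.delta)
    also have "(\<Sum>x<m. C [\<alpha> 0 x, \<alpha> (Suc 0) 0] [x,0] - min_coef C (\<alpha> (Suc 0) 0) x) + min_coef_sum C (\<alpha> (Suc 0) 0) = det_value S2 C \<alpha>"
      by (simp add: det_value_S2 min_coef_sum_def sum_subtractf)
    finally have "(\<Sum>c<K. \<Sum>x<m. \<Sum>a<n. weight C c x a * det_state S2 \<alpha> [a,c] [x,0]) = det_value S2 C \<alpha>" .
    then show "lin_apply S2 \<Phi> (det_state S2 \<alpha>) = 0"
      unfolding \<Phi>_def lin_apply_diff_coef cl by (simp add: lin_apply_det_state[OF va])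
  qed
  then show ?thesis unfolding \<Phi>_def lin_apply_diff_coef cl by simp
qed

definition cells :: "(nat \<times> nat \<times> nat) set" where "cells = {..<K} \<times> {..<m} \<times> {..<n}"
definition entry :: "(nat list \<Rightarrow> nat list \<Rightarrow> real) \<Rightarrow> nat \<times> nat \<times> nat \<Rightarrow> real" where
  "entry q k = q [snd (snd k), fst k] [fst (snd k), 0]"
definition cell_weight :: "(nat list \<Rightarrow> nat list \<Rightarrow> real) \<Rightarrow> nat \<times> nat \<times> nat \<Rightarrow> real" where
  "cell_weight C k = weight C (fst k) (fst (snd k)) (snd (snd k))"

lemma finite_cells[simp]: "finite cells" by (simp add: cells_def)

lemma cells_iff: "k \<in> cells \<longleftrightarrow> fst k < K \<and> fst (snd k) < m \<and> snd (snd k) < n"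
  by (cases k) (auto simp: cells_def)

lemma sum_cells: "(\<Sum>k\<in>cells. g k) = (\<Sum>c<K. \<Sum>x<m. \<Sum>a<n. g (c,x,a))"
  by (simp add: cells_def sum.cartesian_product)

lemma lin_apply_S2_cells: "is_state S2 q \<Longrightarrow> lin_apply S2 C q = (\<Sum>k\<in>cells. cell_weight C k * entry q k)"
  by (simp add: lin_apply_S2_weights sum_cells cell_weight_def entry_def)

definition cell_piece :: "(nat list \<Rightarrow> nat list \<Rightarrow> real) \<Rightarrow> nat \<times> nat \<times> nat \<Rightarrow> nat list \<Rightarrow> nat list \<Rightarrow> real" where
  "cell_piece C k = (\<lambda>a' x'. cell_weight C k * coord_effect [snd (snd k), fst k] [fst (snd k), 0] a' x')"

lemma lin_apply_cell_piece: "k \<in> cells \<Longrightarrow> lin_apply S2 (cell_piece C k) q = cell_weight C k * entry q k"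
  unfolding cell_piece_def lin_apply_scale_coef entry_def
  by (subst lin_apply_coord_effect) (auto simp: cells_iff outputs_Cons_iff inputs_Cons_iff)

lemma cell_weight_nonneg: "is_effect S2 C \<Longrightarrow> k \<in> cells \<Longrightarrow> 0 \<le> cell_weight C k"
  unfolding cell_weight_def by (rule weight_nonneg) (auto simp: cells_iff)

lemma entry_nonneg: "is_state S2 q \<Longrightarrow> 0 \<le> entry q k"
  unfolding entry_def by (rule state_nonneg)

definition cell_refinement :: "(nat \<Rightarrow> nat list \<Rightarrow> nat list \<Rightarrow> real) \<Rightarrow> nat \<Rightarrow> nat list \<Rightarrow> nat list \<Rightarrow> real" where
  "cell_refinement \<mu> s = (case from_nat s :: nat \<times> nat \<times> nat \<times> nat of (r, k) \<Rightarrow> cell_piece (\<mu> r) k)"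

lemma lin_apply_cell_refinement:
  "k \<in> cells \<Longrightarrow> lin_apply S2 (cell_refinement \<mu> (to_nat (r, k))) q = cell_weight (\<mu> r) k * entry q k"
  by (simp add: cell_refinement_def lin_apply_cell_piece)

lemma sum_cell_refinement:
  assumes "is_state S2 q"
  shows "(\<Sum>s\<in>to_nat ` ({r} \<times> cells). lin_apply S2 (cell_refinement \<mu> s) q) = lin_apply S2 (\<mu> r) q"
proof -
  have inj: "inj_on to_nat ({r} \<times> cells)" by (meson inj_on_subset inj_to_nat subset_UNIV)
  have "(\<Sum>s\<in>to_nat ` ({r} \<times> cells). lin_apply S2 (cell_refinement \<mu> s) q)
      = (\<Sum>k\<in>cells. cell_weight (\<mu> r) k * entry q k)"
    by (simp add: sum.reindex[OF inj] sum.cartesian_product' lin_apply_cell_refinement cong: sum.cong)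
  then show ?thesis using lin_apply_S2_cells[OF assms] by simp
qed

lemma is_measurement_cell_refinement:
  assumes meas: "is_measurement S2 R \<mu>"
  shows "is_measurement S2 (to_nat ` (R \<times> cells)) (cell_refinement \<mu>)"
  unfolding is_measurement_def
proof (intro conjI ballI allI impI)
  show "finite (to_nat ` (R \<times> cells))" using measurement_finite[OF meas] by simp
next
  fix s assume "s \<in> to_nat ` (R \<times> cells)"
  then obtain r k where rk: "r \<in> R" "k \<in> cells" and s: "s = to_nat (r, k)" by blast
  have eff: "is_effect S2 (\<mu> r)" using measurement_effect[OF meas rk(1)] .
  have "cell_weight (\<mu> r) k * entry q k \<le> lin_apply S2 (\<mu> r) q" if "is_state S2 q" for q
    unfolding lin_apply_S2_cells[OF that] using rk that eff
    by (intro member_le_sum) (auto intro!: mult_nonneg_nonneg cell_weight_nonneg entry_nonneg)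
  then show "is_effect S2 (cell_refinement \<mu> s)"
    unfolding is_effect_def s lin_apply_cell_refinement[OF rk(2)]
    using effect_bounds[OF eff] cell_weight_nonneg[OF eff rk(2)] entry_nonneg
    by (meson mult_nonneg_nonneg order_trans)
next
  fix q assume st: "is_state S2 q"
  have inj: "inj_on to_nat A" for A :: "(nat \<times> nat \<times> nat \<times> nat) set"
    by (meson inj_on_subset inj_to_nat subset_UNIV)
  have "(\<Sum>s\<in>to_nat ` (R \<times> cells). lin_apply S2 (cell_refinement \<mu> s) q)
      = (\<Sum>r\<in>R. \<Sum>s\<in>to_nat ` ({r} \<times> cells). lin_apply S2 (cell_refinement \<mu> s) q)"
    by (simp add: sum.reindex[OF inj] sum.cartesian_product')
  then show "(\<Sum>s\<in>to_nat ` (R \<times> cells). lin_apply S2 (cell_refinement \<mu> s) q) = 1"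
    using sum_cell_refinement[OF st] measurement_sum[OF meas st] by simp
qed

lemma refines_via_cell_refinement:
  "refines_via S2 (to_nat ` (R \<times> cells)) (cell_refinement \<mu>) (\<lambda>s. fst (from_nat s :: nat \<times> nat \<times> nat \<times> nat)) R \<mu>"
  unfolding refines_via_def
proof (intro conjI ballI allI impI)
  fix r q assume "r \<in> R" "is_state S2 q"
  moreover have "{s \<in> to_nat ` (R \<times> cells). fst (from_nat s :: nat \<times> nat \<times> nat \<times> nat) = r} = to_nat ` ({r} \<times> cells)"
    using \<open>r \<in> R\<close> by auto
  ultimately show "lin_apply S2 (\<mu> r) q
      = (\<Sum>s\<in>{s \<in> to_nat ` (R \<times> cells). fst (from_nat s :: nat \<times> nat \<times> nat \<times> nat) = r}. lin_apply S2 (cell_refinement \<mu> s) q)"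
    using sum_cell_refinement by simp
qed auto

lemma cell_piece_proportional:
  assumes MI: "maximally_informative S2 R \<mu>" and r: "r \<in> R" and k: "k \<in> cells"
  shows "\<exists>t. \<forall>q. is_state S2 q \<longrightarrow> cell_weight (\<mu> r) k * entry q k = t * lin_apply S2 (\<mu> r) q"
proof -
  have meas: "is_measurement S2 R \<mu>" using MI by (simp add: maximally_informative_def)
  have "trivial_refinement S2 (to_nat ` (R \<times> cells)) (cell_refinement \<mu>) (\<lambda>s. fst (from_nat s :: nat \<times> nat \<times> nat \<times> nat)) \<mu>"
    using MI is_measurement_cell_refinement[OF meas] refines_via_cell_refinement unfolding maximally_informative_def by blast
  moreover have "to_nat (r, k) \<in> to_nat ` (R \<times> cells)" using r k by simp
  ultimately obtain t where
    "\<forall>q. is_state S2 q \<longrightarrow> lin_apply S2 (cell_refinement \<mu> (to_nat (r, k))) q = t * lin_apply S2 (\<mu> r) q"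
    unfolding trivial_refinement_def by fastforce
  then show ?thesis by (auto simp: lin_apply_cell_refinement[OF k])
qed

definition cell_strategy :: "nat \<times> nat \<times> nat \<Rightarrow> nat \<Rightarrow> nat \<Rightarrow> nat" where
  "cell_strategy k = (\<lambda>i y. if i = 0 then snd (snd k) else fst k)"

lemma valid_cell_strategy: "k \<in> cells \<Longrightarrow> valid_strategy S2 (cell_strategy k)"
  using valid_strategy_S2 by (auto simp: cell_strategy_def cells_iff)

lemma entry_cell_strategy: "k \<in> cells \<Longrightarrow> entry (det_state S2 (cell_strategy k)) k = 1"
  by (simp add: entry_def det_state_S2 cells_iff cell_strategy_def)

lemma effect_single_cell:
  assumes MI: "maximally_informative S2 R \<mu>" and r: "r \<in> R"
  shows "\<exists>lam k. 0 \<le> lam \<and> k \<in> cells \<and> (\<forall>q. is_state S2 q \<longrightarrow> lin_apply S2 (\<mu> r) q = lam * entry q k)"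
proof -
  have meas: "is_measurement S2 R \<mu>" using MI by (simp add: maximally_informative_def)
  have eff: "is_effect S2 (\<mu> r)" using measurement_effect[OF meas r] .
  show ?thesis
  proof (cases "\<forall>k\<in>cells. cell_weight (\<mu> r) k = 0")
    case True
    have "(0,0,0) \<in> cells" using m1 n1 K1 by (simp add: cells_def)
    moreover have "\<forall>q. is_state S2 q \<longrightarrow> lin_apply S2 (\<mu> r) q = 0 * entry q (0,0,0)"
      using True by (simp add: lin_apply_S2_cells)
    ultimately show ?thesis by blast
  next
    case False
    then obtain k where k: "k \<in> cells" and wne: "cell_weight (\<mu> r) k \<noteq> 0" by blast
    have wpos: "0 < cell_weight (\<mu> r) k" using cell_weight_nonneg[OF eff k] wne by simp
    obtain t where t: "\<forall>q. is_state S2 q \<longrightarrow> cell_weight (\<mu> r) k * entry q k = t * lin_apply S2 (\<mu> r) q"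
      using cell_piece_proportional[OF MI r k] by blast
    define d where "d = det_state S2 (cell_strategy k)"
    have dst: "is_state S2 d" unfolding d_def by (rule det_state_is_state[OF valid_cell_strategy[OF k]])
    have "cell_weight (\<mu> r) k * entry d k = t * lin_apply S2 (\<mu> r) d" using t dst by blast
    then have "cell_weight (\<mu> r) k = t * lin_apply S2 (\<mu> r) d" using entry_cell_strategy[OF k] by (simp add: d_def)
    then have tne: "t \<noteq> 0" and lam: "lin_apply S2 (\<mu> r) d = cell_weight (\<mu> r) k / t" using wpos by auto
    have "0 \<le> lin_apply S2 (\<mu> r) d" using effect_bounds[OF eff dst] by simp
    moreover have "\<forall>q. is_state S2 q \<longrightarrow> lin_apply S2 (\<mu> r) q = (cell_weight (\<mu> r) k / t) * entry q k"
      using t tne by (auto simp: field_simps)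
    ultimately show ?thesis using k lam by metis
  qed
qed

lemma cell_weights_uniform:
  assumes one: "\<And>q. is_state S2 q \<Longrightarrow> (\<Sum>k\<in>cells. W k * entry q k) = 1"
    and c: "c < K" and x: "x < m" and a: "a < n"
  shows "W (c,x,a) = W (c,x,0)" and "(\<Sum>x'<m. W (c,x',0)) = 1"
proof -
  have det: "(\<Sum>x<m. W (\<alpha> (Suc 0) 0, x, \<alpha> 0 x)) = 1" if va: "valid_strategy S2 \<alpha>" for \<alpha>
  proof -
    have a0: "\<forall>x<m. \<alpha> 0 x < n" and a1: "\<alpha> (Suc 0) 0 < K" using va valid_strategy_S2 by blast+
    have "1 = (\<Sum>c<K. \<Sum>x<m. \<Sum>a<n. W (c,x,a) * (if a = \<alpha> 0 x \<and> c = \<alpha> (Suc 0) 0 then 1 else 0))"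
      using one[OF det_state_is_state[OF va]] unfolding sum_cells by (simp add: entry_def det_state_S2)
    also have "\<dots> = (\<Sum>c<K. if c = \<alpha> (Suc 0) 0 then (\<Sum>x<m. W (c,x,\<alpha> 0 x)) else 0)"
      using a0 by (intro sum.cong refl) (auto simp: if_distrib sum.delta' cong: if_cong)
    also have "\<dots> = (\<Sum>x<m. W (\<alpha> (Suc 0) 0,x,\<alpha> 0 x))" using a1 by (simp add: sum.delta')
    finally show ?thesis by simp
  qed
  define \<alpha>1 :: "nat \<Rightarrow> nat \<Rightarrow> nat" where "\<alpha>1 = (\<lambda>i y. if i = 0 then (if y = x then a else 0) else c)"
  define \<alpha>0 :: "nat \<Rightarrow> nat \<Rightarrow> nat" where "\<alpha>0 = (\<lambda>i y. if i = 0 then 0 else c)"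
  have "valid_strategy S2 \<alpha>1" "valid_strategy S2 \<alpha>0" using a c n1 by (simp_all add: valid_strategy_S2 \<alpha>1_def \<alpha>0_def)
  from det[OF this(1)] det[OF this(2)]
  have s1: "(\<Sum>y<m. W (c, y, if y = x then a else 0)) = 1" and s0: "(\<Sum>y<m. W (c, y, 0)) = 1"
    by (simp_all add: \<alpha>1_def \<alpha>0_def)
  have "(\<Sum>y<m. W (c, y, if y = x then a else 0)) = W (c,x,a) + (\<Sum>y\<in>{..<m}-{x}. W (c, y, 0))"
    using x by (subst sum.remove[of _ x]) (auto intro!: sum.cong)
  moreover have "(\<Sum>y<m. W (c, y, 0)) = W (c,x,0) + (\<Sum>y\<in>{..<m}-{x}. W (c, y, 0))"
    using x by (subst sum.remove[of _ x]) auto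
  ultimately show "W (c,x,a) = W (c,x,0)" using s1 s0 by linarith
  show "(\<Sum>x'<m. W (c,x',0)) = 1" by (fact s0)
qed

text \<open>Each outcome of a maximally informative measurement reads a single cell (c, x, a).
  Grouping outcomes by cell and using that the grouped weights W (c, x, a) do not depend on a and
  form a probability distribution over x, the outcome entropy is at least that of reading
  the classical output c and then the other box at the input minimising the conditional entropy.\<close>

theorem two_box_entropy_lower_bound:
  assumes MI: "maximally_informative S2 R \<mu>" and st: "is_state S2 p"
    and pf: "\<forall>a<n. \<forall>c<K. \<forall>x<m. p [a,c] [x,0] = P c * s c x a"
    and Pnn: "\<forall>c<K. 0 \<le> P c" and snn: "\<forall>c<K. \<forall>x<m. \<forall>a<n. 0 \<le> s c x a"
    and ssum: "\<forall>c<K. \<forall>x<m. (\<Sum>a<n. s c x a) = 1"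
    and Lb: "\<forall>c<K. \<forall>x<m. L c \<le> (\<Sum>a<n. ent_term (s c x a))"
  shows "(\<Sum>c<K. ent_term (P c) + P c * L c) \<le> (\<Sum>r\<in>R. ent_term (lin_apply S2 (\<mu> r) p))"
proof -
  have meas: "is_measurement S2 R \<mu>" using MI by (simp add: maximally_informative_def)
  obtain lam kk where lamnn: "\<forall>r\<in>R. 0 \<le> lam r" and kk: "\<forall>r\<in>R. kk r \<in> cells"
    and lk: "\<And>r q. r \<in> R \<Longrightarrow> is_state S2 q \<Longrightarrow> lin_apply S2 (\<mu> r) q = lam r * entry q (kk r)"
    using effect_single_cell[OF MI] by metis
  define W where "W k = (\<Sum>r\<in>{r\<in>R. kk r = k}. lam r)" for k
  have Wnn: "0 \<le> W k" for k unfolding W_def using lamnn by (intro sum_nonneg) auto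
  have one: "(\<Sum>k\<in>cells. W k * entry q k) = 1" if q: "is_state S2 q" for q
  proof -
    have "(\<Sum>k\<in>cells. W k * entry q k) = (\<Sum>r\<in>R. lam r * entry q (kk r))"
      unfolding W_def sum_distrib_right using measurement_finite[OF meas] kk
      by (subst sum.group[symmetric, where g=kk]) (auto intro!: sum.cong)
    also have "\<dots> = 1" using measurement_sum[OF meas q] lk[OF _ q] by simp
    finally show ?thesis .
  qed
  have uniform: "W (c,x,a) = W (c,x,0)" "(\<Sum>x'<m. W (c,x',0)) = 1" if "c < K" "x < m" "a < n" for c x a
    using that by (intro cell_weights_uniform[where W=W] one; simp)+
  have Wle1: "W (c,x,0) \<le> 1" if "c < K" "x < m" for c x
  proof -
    have "W (c,x,0) \<le> (\<Sum>x'<m. W (c,x',0))" using that Wnn by (intro member_le_sum) auto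
    then show ?thesis using uniform(2)[OF that, of 0] n1 by simp
  qed
  have "(\<Sum>c<K. \<Sum>x<m. \<Sum>a<n. W (c,x,0) * ent_term (P c * s c x a))
      \<le> (\<Sum>c<K. \<Sum>x<m. \<Sum>a<n. ent_term (W (c,x,0) * (P c * s c x a)))"
    using Wnn Wle1 Pnn snn by (intro sum_mono ent_term_scale_ge mult_nonneg_nonneg) auto
  also have "\<dots> = (\<Sum>k\<in>cells. ent_term (W k * entry p k))"
    unfolding sum_cells
  proof (intro sum.cong refl)
    fix c x a assume "c \<in> {..<K}" "x \<in> {..<m}" "a \<in> {..<n}"
    then show "ent_term (W (c,x,0) * (P c * s c x a)) = ent_term (W (c,x,a) * entry p (c,x,a))"
      using pf uniform(1)[of c x a] by (simp add: entry_def)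
  qed
  also have "\<dots> \<le> (\<Sum>r\<in>R. ent_term (lam r * entry p (kk r)))"
    unfolding W_def using measurement_finite[OF meas] kk lamnn entry_nonneg[OF st]
    by (intro ent_term_sum_grouped_le) auto
  also have "\<dots> = (\<Sum>r\<in>R. ent_term (lin_apply S2 (\<mu> r) p))"
    using lk st by (intro sum.cong) simp_all
  finally have "(\<Sum>c<K. \<Sum>x<m. \<Sum>a<n. W (c,x,0) * ent_term (P c * s c x a))
      \<le> (\<Sum>r\<in>R. ent_term (lin_apply S2 (\<mu> r) p))" .
  moreover have "(\<Sum>c<K. ent_term (P c) + P c * L c) \<le> (\<Sum>c<K. \<Sum>x<m. \<Sum>a<n. W (c,x,0) * ent_term (P c * s c x a))"
    using Wnn uniform(2)[of _ 0 0] m1 n1 Pnn snn ssum Lb by (intro mixture_entropy_ge) auto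
  ultimately show ?thesis by linarith
qed

lemma is_state_S2_product:
  assumes vanish: "\<And>a x. \<not> (a \<in> outputs S2 \<and> x \<in> inputs S2) \<Longrightarrow> p a x = 0"
    and pf: "\<forall>a<n. \<forall>c<K. \<forall>x<m. p [a,c] [x,0] = P c * s c x a"
    and Pnn: "\<forall>c<K. 0 \<le> P c" and snn: "\<forall>c<K. \<forall>x<m. \<forall>a<n. 0 \<le> s c x a"
    and Psum: "(\<Sum>c<K. P c) = 1"
    and ssum: "\<forall>c<K. \<forall>x<m. (\<Sum>a<n. s c x a) = 1"
  shows "is_state S2 p"
  unfolding is_state_def
proof (intro conjI allI impI ballI)
  fix a x assume "a \<notin> outputs S2 \<or> x \<notin> inputs S2" then show "p a x = 0" using vanish by blast
next
  fix a x show "0 \<le> p a x"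
  proof (cases "a \<in> outputs S2 \<and> x \<in> inputs S2")
    case True
    then obtain a0 c x0 where "a = [a0,c]" "a0 < n" "c < K" "x = [x0,0]" "x0 < m" using outputs_S2_iff inputs_S2_iff by blast
    then show ?thesis using pf Pnn snn by simp
  next
    case False then show ?thesis using vanish by simp
  qed
next
  fix x assume "x \<in> inputs S2"
  then obtain x0 where x: "x = [x0,0]" "x0 < m" using inputs_S2_iff by blast
  have "(\<Sum>a\<in>outputs S2. p a x) = (\<Sum>a0<n. \<Sum>c<K. P c * s c x0 a0)"
    unfolding x(1) using x(2) pf by (simp add: sum_outputs_Cons)
  also have "\<dots> = (\<Sum>c<K. P c * (\<Sum>a0<n. s c x0 a0))" by (simp add: sum_distrib_left sum.swap[of _ "{..<n}"])
  also have "\<dots> = 1" using ssum x(2) Psum by simp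
  finally show "(\<Sum>a\<in>outputs S2. p a x) = 1" .
next
  fix i x x' a assume i: "i < length S2" and x: "x \<in> inputs S2" and x': "x' \<in> inputs S2"
    and ag: "\<forall>j<length S2. j \<noteq> i \<longrightarrow> x!j = x'!j" and a: "a \<in> outputs S2"
  obtain x0 where xx: "x = [x0,0]" "x0 < m" using inputs_S2_iff x by blast
  obtain y0 where yy: "x' = [y0,0]" "y0 < m" using inputs_S2_iff x' by blast
  obtain a0 c where aa: "a = [a0,c]" "a0 < n" "c < K" using outputs_S2_iff a by blast
  show "(\<Sum>ca<snd (S2 ! i). p (a[i := ca]) x) = (\<Sum>ca<snd (S2 ! i). p (a[i := ca]) x')"
  proof (cases "i = 0")
    case True
    have e: "(\<Sum>ca<n. p [ca,c] [z0,0]) = P c" if "z0 < m" for z0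
      using pf aa that ssum by (simp add: sum_distrib_left[symmetric])
    show ?thesis using True aa xx yy e[OF xx(2)] e[OF yy(2)] by simp
  next
    case False
    then have "i = 1" using i by simp
    then have "x!0 = x'!0" using ag by simp
    then have "x = x'" using xx yy by simp
    then show ?thesis by simp
  qed
qed

definition input0_coords :: "(nat list \<times> nat list) set" where
  "input0_coords = (\<lambda>(a,c). ([a,c],[0,0])) ` ({..<n} \<times> {..<K})"

lemma maximally_informative_input0_coords: "maximally_informative S2 (to_nat ` input0_coords) coord_meas"
proof (rule maximally_informative_coord_meas[OF valid_sys_S2])
  show "finite input0_coords" by (simp add: input0_coords_def)
  show "input0_coords \<subseteq> outputs S2 \<times> inputs S2" using m1 by (auto simp: input0_coords_def outputs_Cons_iff inputs_Cons_iff)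
  show "\<forall>\<alpha>. valid_strategy S2 \<alpha> \<longrightarrow> card {k \<in> input0_coords. fst k = det_output \<alpha> (snd k)} = 1"
  proof (intro allI impI)
    fix \<alpha> assume va: "valid_strategy S2 \<alpha>"
    have a0: "\<alpha> 0 0 < n" and a1: "\<alpha> (Suc 0) 0 < K" using va valid_strategy_S2 m1 by auto
    have "{k \<in> input0_coords. fst k = det_output \<alpha> (snd k)} = {([\<alpha> 0 0, \<alpha> (Suc 0) 0],[0,0])}"
      using a0 a1 by (auto simp: input0_coords_def det_output_Cons2)
    then show "card {k \<in> input0_coords. fst k = det_output \<alpha> (snd k)} = 1" by simp
  qed
qed

lemma input0_coords_entropy:
  assumes pf: "\<forall>a<n. \<forall>c<K. \<forall>x<m. p [a,c] [x,0] = P c * s c x a"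
    and Pnn: "\<forall>c<K. 0 \<le> P c" and snn: "\<forall>c<K. \<forall>x<m. \<forall>a<n. 0 \<le> s c x a"
    and ssum: "\<forall>c<K. \<forall>x<m. (\<Sum>a<n. s c x a) = 1"
  shows "(\<Sum>r\<in>to_nat ` input0_coords. ent_term (lin_apply S2 (coord_meas r) p)) = (\<Sum>c<K. ent_term (P c) + P c * (\<Sum>a<n. ent_term (s c 0 a)))"
proof -
  have inj: "inj_on to_nat input0_coords" by (meson inj_on_subset inj_to_nat subset_UNIV)
  have inj2: "inj_on (\<lambda>(a,c). ([a,c],[0::nat,0::nat])) ({..<n} \<times> {..<K})" by (auto simp: inj_on_def)
  have "(\<Sum>r\<in>to_nat ` input0_coords. ent_term (lin_apply S2 (coord_meas r) p)) = (\<Sum>k\<in>input0_coords. ent_term (lin_apply S2 (coord_meas (to_nat k)) p))"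
    by (rule sum.reindex[OF inj, unfolded comp_def])
  also have "\<dots> = (\<Sum>ac\<in>{..<n} \<times> {..<K}. ent_term (lin_apply S2 (coord_meas (to_nat ((\<lambda>(a,c). ([a,c],[0::nat,0::nat])) ac))) p))"
    unfolding input0_coords_def by (rule sum.reindex[OF inj2, unfolded comp_def])
  also have "\<dots> = (\<Sum>a<n. \<Sum>c<K. ent_term (P c * s c 0 a))"
    unfolding sum.cartesian_product' using m1 pf
    by (intro sum.cong refl) (simp add: coord_meas_to_nat lin_apply_coord_effect outputs_Cons_iff inputs_Cons_iff)
  also have "\<dots> = (\<Sum>c<K. \<Sum>a<n. s c 0 a * ent_term (P c) + P c * ent_term (s c 0 a))"
    using Pnn snn m1 by (subst sum.swap) (intro sum.cong refl ent_term_mult; simp)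
  also have "\<dots> = (\<Sum>c<K. ent_term (P c) + P c * (\<Sum>a<n. ent_term (s c 0 a)))"
  proof (intro sum.cong refl)
    fix c assume "c \<in> {..<K}"
    then have "(\<Sum>a<n. s c 0 a) = 1" using ssum m1 by simp
    then show "(\<Sum>a<n. s c 0 a * ent_term (P c) + P c * ent_term (s c 0 a)) = ent_term (P c) + P c * (\<Sum>a<n. ent_term (s c 0 a))"
      by (simp add: sum.distrib sum_distrib_left[symmetric] sum_distrib_right[symmetric])
  qed
  finally show ?thesis .
qed

theorem meas_entropy_S2:
  assumes st: "is_state S2 p"
    and pf: "\<forall>a<n. \<forall>c<K. \<forall>x<m. p [a,c] [x,0] = P c * s c x a"
    and Pnn: "\<forall>c<K. 0 \<le> P c" and snn: "\<forall>c<K. \<forall>x<m. \<forall>a<n. 0 \<le> s c x a"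
    and ssum: "\<forall>c<K. \<forall>x<m. (\<Sum>a<n. s c x a) = 1"
    and min0: "\<forall>c<K. \<forall>x<m. (\<Sum>a<n. ent_term (s c 0 a)) \<le> (\<Sum>a<n. ent_term (s c x a))"
  shows "meas_entropy S2 p = (\<Sum>c<K. ent_term (P c) + P c * (\<Sum>a<n. ent_term (s c 0 a)))"
proof (rule antisym)
  show "meas_entropy S2 p \<le> (\<Sum>c<K. ent_term (P c) + P c * (\<Sum>a<n. ent_term (s c 0 a)))"
    using meas_entropy_le[OF st maximally_informative_input0_coords] input0_coords_entropy[OF pf Pnn snn ssum] by simp
  show "(\<Sum>c<K. ent_term (P c) + P c * (\<Sum>a<n. ent_term (s c 0 a))) \<le> meas_entropy S2 p"
    by (rule meas_entropy_ge[OF maximally_informative_input0_coords]) (rule two_box_entropy_lower_bound[OF _ st pf Pnn snn ssum min0])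
qed

end

section \<open>Classical boxes\<close>

text \<open>A class is the tuple of outputs of the boxes listed in I; when these boxes are classical,
  restricting a state to a class is again no-signalling.\<close>

definition outputs_at :: "nat list \<Rightarrow> nat list \<Rightarrow> nat list" where
  "outputs_at I a = map (\<lambda>i. a!i) I"

definition restrict_class :: "nat list \<Rightarrow> nat list \<Rightarrow> (nat list \<Rightarrow> nat list \<Rightarrow> real) \<Rightarrow> nat list \<Rightarrow> nat list \<Rightarrow> real" where
  "restrict_class I c q = (\<lambda>a x. if outputs_at I a = c then q a x else 0)"

definition class_prob :: "box list \<Rightarrow> nat list \<Rightarrow> (nat list \<Rightarrow> nat list \<Rightarrow> real) \<Rightarrow> nat list \<Rightarrow> real" where
  "class_prob S I q c = (\<Sum>a\<in>outputs S. restrict_class I c q a (replicate (length S) 0))"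

locale classical_boxes =
  fixes S :: "box list" and I :: "nat list"
  assumes vS: "valid_sys S" and Icl: "\<forall>i\<in>set I. i < length S \<and> fst (S!i) = 1"
begin

abbreviation "input0 \<equiv> replicate (length S) (0::nat)"

lemma input0_in_inputs: "input0 \<in> inputs S" by (rule zero_input_in_inputs[OF vS])

lemma outputs_at_det_output: "x \<in> inputs S \<Longrightarrow> outputs_at I (det_output \<alpha> x) = map (\<lambda>i. \<alpha> i 0) I"
proof -
  assume x: "x \<in> inputs S"
  have "det_output \<alpha> x ! i = \<alpha> i 0" if "i \<in> set I" for i
  proof -
    have i: "i < length S" and f: "fst (S!i) = 1" using Icl that by auto
    have l: "length x = length S" and "x!i < fst (S!i)" using x i by (auto simp: inputs_def)
    then have "x!i = 0" using f by simp
    then show ?thesis using i l by simp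
  qed
  then show ?thesis unfolding outputs_at_def by simp
qed

lemma restrict_class_ns_function:
  assumes ps: "ns_function S q"
  shows "ns_function S (restrict_class I c q)"
  unfolding ns_function_def
proof (intro conjI allI impI ballI)
  fix a x assume "a \<notin> outputs S \<or> x \<notin> inputs S"
  then show "restrict_class I c q a x = 0" using ns_function_vanish[OF ps] by (simp add: restrict_class_def)
next
  fix i x x' a assume i: "i < length S" and x: "x \<in> inputs S" and x': "x' \<in> inputs S"
    and ag: "\<forall>j<length S. j \<noteq> i \<longrightarrow> x!j = x'!j" and a: "a \<in> outputs S"
  show "(\<Sum>ca<snd (S ! i). restrict_class I c q (a[i := ca]) x) = (\<Sum>ca<snd (S ! i). restrict_class I c q (a[i := ca]) x')"
  proof (cases "i \<in> set I")
    case True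
    then have "fst (S!i) = 1" using Icl by auto
    then have xi: "x!i < 1" "x'!i < 1" using x x' i by (auto simp: inputs_def)
    have "x = x'"
    proof (rule nth_equalityI)
      show "length x = length x'" using x x' by (simp add: inputs_def)
      fix j assume "j < length x"
      then have j: "j < length S" using x by (simp add: inputs_def)
      show "x!j = x'!j" using ag j xi by (cases "j = i") auto
    qed
    then show ?thesis by simp
  next
    case False
    have "outputs_at I (a[i:=ca]) = outputs_at I a" for ca unfolding outputs_at_def
    proof (rule map_cong[OF refl])
      fix j assume "j \<in> set I"
      then have "j \<noteq> i" using False by auto
      then show "a[i := ca] ! j = a ! j" by simp
    qed
    then have "(\<Sum>ca<snd (S ! i). restrict_class I c q (a[i := ca]) y) = (if outputs_at I a = c then (\<Sum>ca<snd (S ! i). q (a[i := ca]) y) else 0)" for y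
      by (auto simp: restrict_class_def)
    then show ?thesis using ns_function_no_signalling[OF ps i x x' ag a] by simp
  qed
qed

lemma restrict_class_norm:
  assumes st: "is_state S q" and x: "x \<in> inputs S"
  shows "(\<Sum>a\<in>outputs S. restrict_class I c q a x) = class_prob S I q c"
proof -
  define \<Phi> where "\<Phi> = (\<lambda>a x'. (if outputs_at I a = c then 1 else 0) * (norm_effect x a x' - norm_effect input0 a x'))"
  have lin: "lin_apply S \<Phi> r = (\<Sum>a\<in>outputs S. restrict_class I c r a x) - (\<Sum>a\<in>outputs S. restrict_class I c r a input0)" for r
  proof -
    have "lin_apply S \<Phi> r = lin_apply S (norm_effect x) (restrict_class I c r) - lin_apply S (norm_effect input0) (restrict_class I c r)"
      unfolding \<Phi>_def lin_apply_diff_coef[symmetric] by (rule lin_apply_cong) (simp add: restrict_class_def norm_effect_def)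
    then show ?thesis by (simp add: lin_apply_norm_effect[OF x] lin_apply_norm_effect[OF input0_in_inputs])
  qed
  have "lin_apply S \<Phi> q = 0"
  proof (rule det_states_span_ns_functions[OF vS _ state_ns_function[OF st]], intro allI impI)
    fix \<alpha> assume va: "valid_strategy S \<alpha>"
    have e: "(\<Sum>a\<in>outputs S. restrict_class I c (det_state S \<alpha>) a y) = (if map (\<lambda>i. \<alpha> i 0) I = c then 1 else 0)"
      if y: "y \<in> inputs S" for y
    proof -
      have "(\<Sum>a\<in>outputs S. restrict_class I c (det_state S \<alpha>) a y) = (\<Sum>a\<in>outputs S. if a = det_output \<alpha> y then (if outputs_at I a = c then 1 else 0) else 0)"
        using y by (intro sum.cong refl) (auto simp: restrict_class_def det_state_def)
      also have "\<dots> = (if outputs_at I (det_output \<alpha> y) = c then 1 else 0)" using det_output_in_outputs[OF va y] by (simp add: sum.delta')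
      finally show ?thesis using outputs_at_det_output[OF y] by simp
    qed
    show "lin_apply S \<Phi> (det_state S \<alpha>) = 0" unfolding lin e[OF x] e[OF input0_in_inputs] by simp
  qed
  then show ?thesis unfolding lin class_prob_def by simp
qed

lemma class_prob_nonneg: "is_state S q \<Longrightarrow> 0 \<le> class_prob S I q c"
  unfolding class_prob_def restrict_class_def by (intro sum_nonneg) (auto simp: state_nonneg)

lemma restrict_class_normalized:
  assumes st: "is_state S q" and pos: "class_prob S I q c > 0"
  shows "is_state S (\<lambda>a x. restrict_class I c q a x / class_prob S I q c)"
  unfolding is_state_def
proof (intro conjI allI impI ballI)
  fix a x assume "a \<notin> outputs S \<or> x \<notin> inputs S"
  then show "restrict_class I c q a x / class_prob S I q c = 0" using state_vanish[OF st] by (simp add: restrict_class_def)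
next
  fix a x show "0 \<le> restrict_class I c q a x / class_prob S I q c" using pos state_nonneg[OF st] by (simp add: restrict_class_def)
next
  fix x assume x: "x \<in> inputs S"
  show "(\<Sum>a\<in>outputs S. restrict_class I c q a x / class_prob S I q c) = 1"
    using restrict_class_norm[OF st x] pos by (simp add: sum_divide_distrib[symmetric])
next
  fix i x x' a assume i: "i < length S" and x: "x \<in> inputs S" and x': "x' \<in> inputs S"
    and ag: "\<forall>j<length S. j \<noteq> i \<longrightarrow> x!j = x'!j" and a: "a \<in> outputs S"
  have "(\<Sum>ca<snd (S!i). restrict_class I c q (a[i:=ca]) x) = (\<Sum>ca<snd (S!i). restrict_class I c q (a[i:=ca]) x')"
    by (rule ns_function_no_signalling[OF restrict_class_ns_function[OF state_ns_function[OF st]] i x x' ag a])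
  then show "(\<Sum>ca<snd (S!i). restrict_class I c q (a[i:=ca]) x / class_prob S I q c) = (\<Sum>ca<snd (S!i). restrict_class I c q (a[i:=ca]) x' / class_prob S I q c)"
    by (simp add: sum_divide_distrib[symmetric])
qed

lemma restrict_class_zero:
  assumes st: "is_state S q" and z0: "class_prob S I q c = 0"
  shows "restrict_class I c q a x = 0"
proof (cases "a \<in> outputs S \<and> x \<in> inputs S")
  case True
  have "(\<Sum>a\<in>outputs S. restrict_class I c q a x) = 0" using restrict_class_norm[OF st] True z0 by simp
  moreover have "\<forall>a\<in>outputs S. 0 \<le> restrict_class I c q a x" using state_nonneg[OF st] by (simp add: restrict_class_def)
  ultimately show ?thesis using True by (simp add: sum_nonneg_eq_0_iff)
next
  case False then show ?thesis using state_vanish[OF st] by (auto simp: restrict_class_def)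
qed

lemma lin_apply_restrict_class_scale:
  assumes st: "is_state S q"
  shows "lin_apply S C (restrict_class I c q) = class_prob S I q c * lin_apply S C (\<lambda>a x. restrict_class I c q a x / class_prob S I q c)"
proof (cases "class_prob S I q c = 0")
  case True
  then have "restrict_class I c q = (\<lambda>a x. 0)" using restrict_class_zero[OF st] by (auto simp: fun_eq_iff)
  then show ?thesis using True by (simp add: lin_apply_zero_state)
next
  case False
  then show ?thesis by (simp add: lin_apply_scale_state[symmetric] )
qed

lemma restrict_class_effect_bounds:
  assumes eff: "is_effect S C" and st: "is_state S q"
  shows "0 \<le> lin_apply S C (restrict_class I c q) \<and> lin_apply S C (restrict_class I c q) \<le> class_prob S I q c"
proof (cases "class_prob S I q c = 0")
  case True
  then have "restrict_class I c q = (\<lambda>a x. 0)" using restrict_class_zero[OF st] by (auto simp: fun_eq_iff)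
  then show ?thesis using True by (simp add: lin_apply_zero_state)
next
  case False
  then have pos: "class_prob S I q c > 0" using class_prob_nonneg[OF st, of c] by simp
  have b: "0 \<le> lin_apply S C (\<lambda>a x. restrict_class I c q a x / class_prob S I q c) \<and> lin_apply S C (\<lambda>a x. restrict_class I c q a x / class_prob S I q c) \<le> 1"
    by (rule effect_bounds[OF eff restrict_class_normalized[OF st pos]])
  show ?thesis unfolding lin_apply_restrict_class_scale[OF st] using b pos
    by (simp add: mult_nonneg_nonneg mult_left_le)
qed

lemma meas_restrict_class_sum:
  assumes meas: "is_measurement S R \<mu>" and st: "is_state S q"
  shows "(\<Sum>r\<in>R. lin_apply S (\<mu> r) (restrict_class I c q)) = class_prob S I q c"
proof (cases "class_prob S I q c = 0")
  case True
  then have "restrict_class I c q = (\<lambda>a x. 0)" using restrict_class_zero[OF st] by (auto simp: fun_eq_iff)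
  then show ?thesis using True by (simp add: lin_apply_zero_state)
next
  case False
  then have pos: "class_prob S I q c > 0" using class_prob_nonneg[OF st, of c] by simp
  show ?thesis unfolding lin_apply_restrict_class_scale[OF st] sum_distrib_left[symmetric]
    using measurement_sum[OF meas restrict_class_normalized[OF st pos]] by simp
qed

definition classes :: "nat list set" where "classes = outputs_at I ` outputs S"

lemma finite_classes[simp]: "finite classes" by (simp add: classes_def)

lemma lin_apply_sum_restrict_class: "lin_apply S C q = (\<Sum>c\<in>classes. lin_apply S C (restrict_class I c q))"
proof -
  have "(\<Sum>c\<in>classes. lin_apply S C (restrict_class I c q)) = lin_apply S C (\<lambda>a x. \<Sum>c\<in>classes. restrict_class I c q a x)"
    by (simp add: lin_apply_sum_state)
  also have "\<dots> = lin_apply S C q"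
  proof (rule lin_apply_cong)
    fix a x assume a: "a \<in> outputs S" and "x \<in> inputs S"
    have "(\<Sum>c\<in>classes. restrict_class I c q a x) = (\<Sum>c\<in>classes. if c = outputs_at I a then q a x else 0)"
      by (intro sum.cong refl) (auto simp: restrict_class_def)
    also have "\<dots> = q a x" using a by (simp add: classes_def sum.delta')
    finally show "C a x * (\<Sum>c\<in>classes. restrict_class I c q a x) = C a x * q a x" by simp
  qed
  finally show ?thesis by simp
qed

lemma class_prob_norm_effect: "class_prob S I q c = lin_apply S (norm_effect input0) (restrict_class I c q)"
  by (simp add: class_prob_def lin_apply_norm_effect[OF input0_in_inputs])

lemma class_prob_sum: "is_state S q \<Longrightarrow> (\<Sum>c\<in>classes. class_prob S I q c) = 1"
  unfolding class_prob_norm_effect lin_apply_sum_restrict_class[symmetric] by (simp add: lin_apply_norm_effect[OF input0_in_inputs] state_norm[OF _ input0_in_inputs])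

lemma class_prob_le_1: "is_state S q \<Longrightarrow> c \<in> classes \<Longrightarrow> class_prob S I q c \<le> 1"
  using class_prob_sum[of q] member_le_sum[of c classes "class_prob S I q"] class_prob_nonneg by simp

definition class_refinement :: "(nat \<Rightarrow> nat list \<Rightarrow> nat list \<Rightarrow> real) \<Rightarrow> nat \<Rightarrow> nat list \<Rightarrow> nat list \<Rightarrow> real" where
  "class_refinement \<mu> s = (case from_nat s :: nat \<times> nat list of
     (r, c) \<Rightarrow> (\<lambda>a x. \<mu> r a x * (if outputs_at I a = c then 1 else 0)))"

lemma lin_apply_class_refinement:
  "lin_apply S (class_refinement \<mu> (to_nat (r, c))) q = lin_apply S (\<mu> r) (restrict_class I c q)"
  unfolding class_refinement_def by (simp, rule lin_apply_cong) (simp add: restrict_class_def)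

lemma class_refinement_refines:
  assumes meas: "is_measurement S R \<mu>"
  shows "is_measurement S (to_nat ` (R \<times> classes)) (class_refinement \<mu>)"
    and "refines_via S (to_nat ` (R \<times> classes)) (class_refinement \<mu>) (\<lambda>s. fst (from_nat s :: nat \<times> nat list)) R \<mu>"
proof -
  have inj: "inj_on to_nat A" for A :: "(nat \<times> nat list) set" by (meson inj_on_subset inj_to_nat subset_UNIV)
  have sum_pieces: "(\<Sum>s\<in>to_nat ` ({r} \<times> classes). lin_apply S (class_refinement \<mu> s) q) = lin_apply S (\<mu> r) q" for r q
    by (simp add: sum.reindex[OF inj] sum.cartesian_product' lin_apply_class_refinement lin_apply_sum_restrict_class[symmetric])
  show "is_measurement S (to_nat ` (R \<times> classes)) (class_refinement \<mu>)"
    unfolding is_measurement_def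
  proof (intro conjI ballI allI impI)
    show "finite (to_nat ` (R \<times> classes))" using measurement_finite[OF meas] by simp
  next
    fix s assume "s \<in> to_nat ` (R \<times> classes)"
    then obtain r c where rc: "r \<in> R" "c \<in> classes" and s: "s = to_nat (r, c)" by blast
    show "is_effect S (class_refinement \<mu> s)" unfolding is_effect_def s lin_apply_class_refinement
      using restrict_class_effect_bounds[OF measurement_effect[OF meas rc(1)]] class_prob_le_1[OF _ rc(2)]
      by (meson order_trans)
  next
    fix q assume q: "is_state S q"
    have "(\<Sum>s\<in>to_nat ` (R \<times> classes). lin_apply S (class_refinement \<mu> s) q)
        = (\<Sum>r\<in>R. \<Sum>s\<in>to_nat ` ({r} \<times> classes). lin_apply S (class_refinement \<mu> s) q)"
      by (simp add: sum.reindex[OF inj] sum.cartesian_product')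
    then show "(\<Sum>s\<in>to_nat ` (R \<times> classes). lin_apply S (class_refinement \<mu> s) q) = 1"
      using sum_pieces measurement_sum[OF meas q] by simp
  qed
  show "refines_via S (to_nat ` (R \<times> classes)) (class_refinement \<mu>) (\<lambda>s. fst (from_nat s :: nat \<times> nat list)) R \<mu>"
    unfolding refines_via_def
  proof (intro conjI ballI allI impI)
    fix r q assume "r \<in> R"
    then have "{s \<in> to_nat ` (R \<times> classes). fst (from_nat s :: nat \<times> nat list) = r} = to_nat ` ({r} \<times> classes)"
      by auto
    then show "lin_apply S (\<mu> r) q
        = (\<Sum>s\<in>{s \<in> to_nat ` (R \<times> classes). fst (from_nat s :: nat \<times> nat list) = r}. lin_apply S (class_refinement \<mu> s) q)"
      using sum_pieces by simp
  qed auto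
qed

lemma restrict_class_proportional:
  assumes MI: "maximally_informative S R \<mu>" and r: "r \<in> R" and c: "c \<in> classes"
  shows "\<exists>t. \<forall>q. is_state S q \<longrightarrow> lin_apply S (\<mu> r) (restrict_class I c q) = t * lin_apply S (\<mu> r) q"
proof -
  have meas: "is_measurement S R \<mu>" using MI by (simp add: maximally_informative_def)
  have "trivial_refinement S (to_nat ` (R \<times> classes)) (class_refinement \<mu>) (\<lambda>s. fst (from_nat s :: nat \<times> nat list)) \<mu>"
    using MI class_refinement_refines[OF meas] unfolding maximally_informative_def by blast
  moreover have "to_nat (r, c) \<in> to_nat ` (R \<times> classes)" using r c by simp
  ultimately obtain t where
    "\<forall>q. is_state S q \<longrightarrow> lin_apply S (class_refinement \<mu> (to_nat (r, c))) q = t * lin_apply S (\<mu> r) q"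
    unfolding trivial_refinement_def by fastforce
  then show ?thesis by (auto simp: lin_apply_class_refinement)
qed

text \<open>An outcome of a maximally informative measurement that occurs together with class c
  occurs only together with c: its probability is at most that of c.\<close>

lemma meas_outcome_le_class_prob:
  assumes MI: "maximally_informative S R \<mu>" and st: "is_state S p" and r: "r \<in> R" and c: "c \<in> classes"
    and pos: "0 < lin_apply S (\<mu> r) (restrict_class I c p)"
  shows "lin_apply S (\<mu> r) p \<le> class_prob S I p c"
proof -
  have eff: "is_effect S (\<mu> r)" using MI r unfolding maximally_informative_def by (blast intro: measurement_effect)
  obtain t where t: "\<forall>q. is_state S q \<longrightarrow> lin_apply S (\<mu> r) (restrict_class I c q) = t * lin_apply S (\<mu> r) q"
    using restrict_class_proportional[OF MI r c] by blast
  have tne: "t \<noteq> 0" using t st pos by auto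
  have other: "lin_apply S (\<mu> r) (restrict_class I c' p) = 0" if c': "c' \<noteq> c" for c'
  proof (cases "class_prob S I p c' = 0")
    case True
    then have "restrict_class I c' p = (\<lambda>a x. 0)" using restrict_class_zero[OF st] by (auto simp: fun_eq_iff)
    then show ?thesis by (simp add: lin_apply_zero_state)
  next
    case False
    then have cpos: "class_prob S I p c' > 0" using class_prob_nonneg[OF st, of c'] by simp
    define q where "q = (\<lambda>a x. restrict_class I c' p a x / class_prob S I p c')"
    have q: "is_state S q" unfolding q_def by (rule restrict_class_normalized[OF st cpos])
    have "restrict_class I c q = (\<lambda>a x. 0)" using c' by (auto simp: fun_eq_iff restrict_class_def q_def)
    moreover have "lin_apply S (\<mu> r) (restrict_class I c q) = t * lin_apply S (\<mu> r) q" using t q by blast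
    ultimately have "lin_apply S (\<mu> r) q = 0" using tne by (simp add: lin_apply_zero_state)
    then show ?thesis unfolding lin_apply_restrict_class_scale[OF st] q_def[symmetric] by simp
  qed
  have "lin_apply S (\<mu> r) p = (\<Sum>c'\<in>classes. lin_apply S (\<mu> r) (restrict_class I c' p))"
    by (rule lin_apply_sum_restrict_class)
  also have "\<dots> = lin_apply S (\<mu> r) (restrict_class I c p)"
    using c other by (subst sum.remove[of _ c]) (auto intro: sum.neutral)
  finally show ?thesis using restrict_class_effect_bounds[OF eff st] by simp
qed

theorem class_entropy_le_meas:
  assumes MI: "maximally_informative S R \<mu>" and st: "is_state S p"
  shows "(\<Sum>c\<in>classes. ent_term (class_prob S I p c)) \<le> (\<Sum>r\<in>R. ent_term (lin_apply S (\<mu> r) p))"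
proof -
  have meas: "is_measurement S R \<mu>" using MI by (simp add: maximally_informative_def)
  have eff: "is_effect S (\<mu> r)" if "r \<in> R" for r using measurement_effect[OF meas that] .
  define y where "y r c = lin_apply S (\<mu> r) (restrict_class I c p)" for r c
  have ynn: "0 \<le> y r c" if "r \<in> R" for r c using restrict_class_effect_bounds[OF eff[OF that] st] by (simp add: y_def)
  have ysum: "lin_apply S (\<mu> r) p = (\<Sum>c\<in>classes. y r c)" for r unfolding y_def by (rule lin_apply_sum_restrict_class)
  have per_r: "(\<Sum>c\<in>classes. y r c * (- log 2 (class_prob S I p c))) \<le> ent_term (lin_apply S (\<mu> r) p)"
    if r: "r \<in> R" for r
  proof (cases "lin_apply S (\<mu> r) p = 0")
    case True
    then have "\<forall>c\<in>classes. y r c = 0" using ysum[of r] ynn[OF r] by (simp add: sum_nonneg_eq_0_iff)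
    then show ?thesis using True by simp
  next
    case False
    then have qpos: "lin_apply S (\<mu> r) p > 0" using effect_bounds[OF eff[OF r] st] by simp
    have "y r c * (- log 2 (class_prob S I p c)) \<le> y r c * (- log 2 (lin_apply S (\<mu> r) p))"
      if c: "c \<in> classes" for c
    proof (cases "y r c = 0")
      case False
      then have "y r c > 0" using ynn[OF r, of c] by simp
      moreover from this have "lin_apply S (\<mu> r) p \<le> class_prob S I p c"
        using meas_outcome_le_class_prob[OF MI st r c] by (simp add: y_def)
      ultimately show ?thesis using qpos by (intro mult_left_mono) auto
    qed simp
    then have "(\<Sum>c\<in>classes. y r c * (- log 2 (class_prob S I p c)))
        \<le> (\<Sum>c\<in>classes. y r c) * (- log 2 (lin_apply S (\<mu> r) p))"
      unfolding sum_distrib_right by (rule sum_mono)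
    also have "\<dots> = ent_term (lin_apply S (\<mu> r) p)"
      unfolding ysum[symmetric] ent_term_def using qpos by simp
    finally show ?thesis .
  qed
  have "(\<Sum>c\<in>classes. ent_term (class_prob S I p c)) = (\<Sum>c\<in>classes. (\<Sum>r\<in>R. y r c) * (- log 2 (class_prob S I p c)))"
    unfolding y_def meas_restrict_class_sum[OF meas st]
    using class_prob_nonneg[OF st] by (intro sum.cong refl) (auto simp: ent_term_def intro: order.antisym)
  also have "\<dots> = (\<Sum>r\<in>R. \<Sum>c\<in>classes. y r c * (- log 2 (class_prob S I p c)))"
    unfolding sum_distrib_right by (rule sum.swap)
  also have "\<dots> \<le> (\<Sum>r\<in>R. ent_term (lin_apply S (\<mu> r) p))" by (intro sum_mono per_r)
  finally show ?thesis .
qed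

end

section \<open>The witness states\<close>

declare sum.lessThan_Suc[simp del]

definition bit :: "nat \<Rightarrow> nat" where "bit k = (if k = 0 then 0 else 1)"

lemma bit_less_2[simp]: "bit k < 2" by (simp add: bit_def)
lemma bit_cases: "bit k = 0 \<or> bit k = 1" by (simp add: bit_def)

lemma sum_swap_4:
  "(\<Sum>a0\<in>I0. \<Sum>a1\<in>I1. \<Sum>a2\<in>I2. \<Sum>a3\<in>I3. F a0 a1 a2 a3) = (\<Sum>a1\<in>I1. \<Sum>a3\<in>I3. \<Sum>a0\<in>I0. \<Sum>a2\<in>I2. F a0 a1 a2 a3)"
proof -
  have "(\<Sum>a0\<in>I0. \<Sum>a1\<in>I1. \<Sum>a2\<in>I2. \<Sum>a3\<in>I3. F a0 a1 a2 a3) = (\<Sum>a1\<in>I1. \<Sum>a0\<in>I0. \<Sum>a2\<in>I2. \<Sum>a3\<in>I3. F a0 a1 a2 a3)"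
    by (rule sum.swap)
  also have "\<dots> = (\<Sum>a1\<in>I1. \<Sum>a0\<in>I0. \<Sum>a3\<in>I3. \<Sum>a2\<in>I2. F a0 a1 a2 a3)"
    by (intro sum.cong refl sum.swap)
  also have "\<dots> = (\<Sum>a1\<in>I1. \<Sum>a3\<in>I3. \<Sum>a0\<in>I0. \<Sum>a2\<in>I2. F a0 a1 a2 a3)"
    by (intro sum.cong refl sum.swap)
  finally show ?thesis .
qed

lemma sum_lessThan_Suc_if_0: "(\<Sum>i<Suc N. if i = 0 then u else v) = u + real N * v"
  by (subst sum.lessThan_Suc_shift) simp

lemma length_4_conv: "length a = Suc (Suc (Suc (Suc 0))) \<Longrightarrow> \<exists>a0 a1 a2 a3. a = [a0,a1,a2,a3]"
  by (simp add: length_Suc_conv) blast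

text \<open>Boxes 0 and 1 are Alice's X and A, boxes 2 and 3 Bob's Y and B. The classical outputs are
  distributed by pA and pB; fX a0 x0 B is the probability that X answers a0 to x0 given B, and
  gY a2 y A B that Y answers a2 to y given A and B, its outputs 0 and 1 being reserved for bit B.\<close>

locale witness =
  fixes NA NB Nu Nv :: nat and sA sB :: real
  assumes NA: "1 \<le> NA" and NB: "1 \<le> NB" and Nu: "1 \<le> Nu" and Nv: "1 \<le> Nv"
    and sA: "0 \<le> sA" "sA \<le> 1" and sB: "0 \<le> sB" "sB \<le> 1"
begin

abbreviation "SX \<equiv> [(2::nat, Suc Nv), (Suc 0, Suc NA)]"
abbreviation "SY \<equiv> [(2::nat, Suc (Suc Nu)), (Suc 0, Suc NB)]"
abbreviation "S4 \<equiv> [(2::nat, Suc Nv), (Suc 0, Suc NA), (2::nat, Suc (Suc Nu)), (Suc 0, Suc NB)]"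

definition pA :: "nat \<Rightarrow> real" where "pA A = (if A = 0 then 1 - sA else sA / NA)"
definition pB :: "nat \<Rightarrow> real" where "pB B = (if B = 0 then 1 - sB else sB / NB)"
definition fX :: "nat \<Rightarrow> nat \<Rightarrow> nat \<Rightarrow> real" where
  "fX a0 x0 B = (if x0 = bit B then (if a0 = 0 then 1 else 0) else (if a0 = 0 then 0 else 1 / Nv))"
definition gY :: "nat \<Rightarrow> nat \<Rightarrow> nat \<Rightarrow> nat \<Rightarrow> real" where
  "gY a2 y A B = (if y = bit A then (if a2 = bit B then 1 else 0) else (if a2 < 2 then 0 else 1 / Nu))"

lemma pA_nonneg: "0 \<le> pA A" using sA NA by (simp add: pA_def)
lemma pB_nonneg: "0 \<le> pB B" using sB NB by (simp add: pB_def)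
lemma fX_nonneg: "0 \<le> fX a0 x0 B" using Nv by (simp add: fX_def)
lemma gY_nonneg: "0 \<le> gY a2 y A B" using Nu by (simp add: gY_def)

lemma pA_sum: "(\<Sum>A<Suc NA. pA A) = 1"
  unfolding pA_def sum_lessThan_Suc_if_0 using NA by simp
lemma pB_sum: "(\<Sum>B<Suc NB. pB B) = 1"
  unfolding pB_def sum_lessThan_Suc_if_0 using NB by simp
lemma fX_sum: "(\<Sum>a0<Suc Nv. fX a0 x0 B) = 1"
proof (cases "x0 = bit B")
  case True then show ?thesis by (simp add: fX_def sum.delta)
next
  case False
  then have "(\<Sum>a0<Suc Nv. fX a0 x0 B) = (\<Sum>a0<Suc Nv. if a0 = 0 then 0 else 1 / Nv)"
    by (simp add: fX_def)
  also have "\<dots> = 1" unfolding sum_lessThan_Suc_if_0 using Nv by simp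
  finally show ?thesis .
qed
lemma gY_sum: "(\<Sum>a2<Suc (Suc Nu). gY a2 y A B) = 1"
proof (cases "y = bit A")
  case True
  have "bit B < Suc (Suc Nu)" using bit_less_2[of B] by linarith
  then show ?thesis using True by (simp add: gY_def sum.delta)
next
  case False
  then have "(\<Sum>a2<Suc (Suc Nu). gY a2 y A B) = (\<Sum>a2<Suc (Suc Nu). if a2 < 2 then 0 else 1 / Nu)"
    by (simp add: gY_def)
  also have "\<dots> = (\<Sum>a2<Nu. 1 / Nu)" by (simp only: sum.lessThan_Suc_shift) simp
  also have "\<dots> = 1" using Nu by simp
  finally show ?thesis .
qed

definition witness_state :: "nat list \<Rightarrow> nat list \<Rightarrow> real" where
  "witness_state a x = (if a \<in> outputs S4 \<and> x \<in> inputs S4 then pA (a!1) * pB (a!3) * fX (a!0) (x!0) (a!3) * gY (a!2) (x!2) (a!1) (a!3) else 0)"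

lemma outputs_S4_iff: "a \<in> outputs S4 \<longleftrightarrow> (\<exists>a0 a1 a2 a3. a = [a0,a1,a2,a3] \<and> a0 < Suc Nv \<and> a1 < Suc NA \<and> a2 < Suc (Suc Nu) \<and> a3 < Suc NB)"
proof
  assume a: "a \<in> outputs S4"
  then have "length a = Suc (Suc (Suc (Suc 0)))" by (simp add: outputs_def)
  then obtain a0 a1 a2 a3 where "a = [a0,a1,a2,a3]" using length_4_conv by blast
  with a show "\<exists>a0 a1 a2 a3. a = [a0,a1,a2,a3] \<and> a0 < Suc Nv \<and> a1 < Suc NA \<and> a2 < Suc (Suc Nu) \<and> a3 < Suc NB"
    by (simp add: outputs_Cons_iff)
qed (auto simp: outputs_Cons_iff)

lemma inputs_S4_iff: "x \<in> inputs S4 \<longleftrightarrow> (\<exists>x0 x2. x = [x0,0,x2,0] \<and> x0 < 2 \<and> x2 < 2)"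
proof
  assume x: "x \<in> inputs S4"
  then have "length x = Suc (Suc (Suc (Suc 0)))" by (simp add: inputs_def)
  then obtain x0 x1 x2 x3 where "x = [x0,x1,x2,x3]" using length_4_conv by blast
  with x show "\<exists>x0 x2. x = [x0,0,x2,0] \<and> x0 < 2 \<and> x2 < 2"
    by (simp add: inputs_Cons_iff)
qed (auto simp: inputs_Cons_iff)

lemma witness_state_eq: "a0 < Suc Nv \<Longrightarrow> a1 < Suc NA \<Longrightarrow> a2 < Suc (Suc Nu) \<Longrightarrow> a3 < Suc NB \<Longrightarrow> x0 < 2 \<Longrightarrow> x2 < 2 \<Longrightarrow>
  witness_state [a0,a1,a2,a3] [x0,0,x2,0] = pA a1 * pB a3 * fX a0 x0 a3 * gY a2 x2 a1 a3"
  by (simp add: witness_state_def outputs_Cons_iff inputs_Cons_iff)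

lemma sum_outputs_S4: "(\<Sum>a\<in>outputs S4. F a) = (\<Sum>a0<Suc Nv. \<Sum>a1<Suc NA. \<Sum>a2<Suc (Suc Nu). \<Sum>a3<Suc NB. F [a0,a1,a2,a3])"
  by (simp add: sum_outputs_Cons)

lemma witness_state_norm: "x \<in> inputs S4 \<Longrightarrow> (\<Sum>a\<in>outputs S4. witness_state a x) = 1"
proof -
  assume "x \<in> inputs S4"
  then obtain x0 x2 where x: "x = [x0,0,x2,0]" "x0 < 2" "x2 < 2" using inputs_S4_iff by blast
  have "(\<Sum>a\<in>outputs S4. witness_state a x) = (\<Sum>a0<Suc Nv. \<Sum>a1<Suc NA. \<Sum>a2<Suc (Suc Nu). \<Sum>a3<Suc NB.
         pA a1 * pB a3 * fX a0 x0 a3 * gY a2 x2 a1 a3)"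
    unfolding sum_outputs_S4 x(1) using x by (intro sum.cong refl) (simp add: witness_state_eq)
  also have "\<dots> = (\<Sum>a1<Suc NA. \<Sum>a3<Suc NB. \<Sum>a0<Suc Nv. \<Sum>a2<Suc (Suc Nu).
         pA a1 * pB a3 * fX a0 x0 a3 * gY a2 x2 a1 a3)" by (rule sum_swap_4)
  also have "\<dots> = (\<Sum>a1<Suc NA. \<Sum>a3<Suc NB. pA a1 * pB a3 * ((\<Sum>a0<Suc Nv. fX a0 x0 a3) * (\<Sum>a2<Suc (Suc Nu). gY a2 x2 a1 a3)))"
  proof (intro sum.cong refl)
    fix a1 a3
    show "(\<Sum>a0<Suc Nv. \<Sum>a2<Suc (Suc Nu). pA a1 * pB a3 * fX a0 x0 a3 * gY a2 x2 a1 a3) =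
      pA a1 * pB a3 * ((\<Sum>a0<Suc Nv. fX a0 x0 a3) * (\<Sum>a2<Suc (Suc Nu). gY a2 x2 a1 a3))"
    proof -
      have "pA a1 * pB a3 * ((\<Sum>a0<Suc Nv. fX a0 x0 a3) * (\<Sum>a2<Suc (Suc Nu). gY a2 x2 a1 a3))
          = pA a1 * pB a3 * (\<Sum>a0<Suc Nv. \<Sum>a2<Suc (Suc Nu). fX a0 x0 a3 * gY a2 x2 a1 a3)"
        by (simp only: sum_product)
      also have "\<dots> = (\<Sum>a0<Suc Nv. \<Sum>a2<Suc (Suc Nu). pA a1 * pB a3 * (fX a0 x0 a3 * gY a2 x2 a1 a3))"
        by (simp only: sum_distrib_left)
      finally show ?thesis by (simp add: mult_ac)
    qed
  qed
  also have "\<dots> = (\<Sum>a1<Suc NA. pA a1) * (\<Sum>a3<Suc NB. pB a3)"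
    by (simp add: fX_sum gY_sum sum_product)
  also have "\<dots> = 1" by (simp add: pA_sum pB_sum)
  finally show ?thesis .
qed

lemma witness_state_no_signalling:
  assumes i: "i < length S4" and x: "x \<in> inputs S4" and x': "x' \<in> inputs S4"
    and ag: "\<forall>j<length S4. j \<noteq> i \<longrightarrow> x!j = x'!j" and a: "a \<in> outputs S4"
  shows "(\<Sum>c<snd (S4 ! i). witness_state (a[i := c]) x) = (\<Sum>c<snd (S4 ! i). witness_state (a[i := c]) x')"
proof -
  obtain x0 x2 where xx: "x = [x0,0,x2,0]" "x0 < 2" "x2 < 2" using inputs_S4_iff x by blast
  obtain y0 y2 where yy: "x' = [y0,0,y2,0]" "y0 < 2" "y2 < 2" using inputs_S4_iff x' by blast
  obtain a0 a1 a2 a3 where aa: "a = [a0,a1,a2,a3]" "a0 < Suc Nv" "a1 < Suc NA" "a2 < Suc (Suc Nu)" "a3 < Suc NB"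
    using outputs_S4_iff a by blast
  consider "i = 0" | "i = 2" | "i = 1 \<or> i = 3" using i by fastforce
  then show ?thesis
  proof cases
    case 1
    have "x!2 = x'!2" using ag 1 by simp
    then have "x2 = y2" using xx yy by simp
    have e: "(\<Sum>c<Suc Nv. witness_state [c,a1,a2,a3] [z0,0,x2,0]) = pA a1 * pB a3 * gY a2 x2 a1 a3" if "z0 < 2" for z0
    proof -
      have "(\<Sum>c<Suc Nv. witness_state [c,a1,a2,a3] [z0,0,x2,0]) = (\<Sum>c<Suc Nv. pA a1 * pB a3 * gY a2 x2 a1 a3 * fX c z0 a3)"
        using aa xx that by (intro sum.cong refl) (simp add: witness_state_eq)
      also have "\<dots> = pA a1 * pB a3 * gY a2 x2 a1 a3" by (simp add: sum_distrib_left[symmetric] fX_sum)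
      finally show ?thesis .
    qed
    show ?thesis using 1 aa xx yy e[OF xx(2)] e[OF yy(2)] \<open>x2 = y2\<close> by simp
  next
    case 2
    have "x!0 = x'!0" using ag 2 by simp
    then have "x0 = y0" using xx yy by simp
    have e: "(\<Sum>c<Suc (Suc Nu). witness_state [a0,a1,c,a3] [x0,0,z2,0]) = pA a1 * pB a3 * fX a0 x0 a3" if "z2 < 2" for z2
    proof -
      have "(\<Sum>c<Suc (Suc Nu). witness_state [a0,a1,c,a3] [x0,0,z2,0]) = (\<Sum>c<Suc (Suc Nu). pA a1 * pB a3 * fX a0 x0 a3 * gY c z2 a1 a3)"
        using aa xx that by (intro sum.cong refl) (simp add: witness_state_eq)
      also have "\<dots> = pA a1 * pB a3 * fX a0 x0 a3" by (simp add: sum_distrib_left[symmetric] gY_sum)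
      finally show ?thesis .
    qed
    show ?thesis using 2 aa xx yy e[OF xx(3)] e[OF yy(3)] \<open>x0 = y0\<close> by simp
  next
    case 3
    have "x!0 = x'!0" "x!2 = x'!2" using ag 3 by auto
    then have "x0 = y0" "x2 = y2" using xx yy by simp_all
    then have "x = x'" using xx yy by simp
    then show ?thesis by simp
  qed
qed

lemma is_state_witness_state: "is_state S4 witness_state"
  unfolding is_state_def
proof (intro conjI allI impI ballI)
  fix a x assume "a \<notin> outputs S4 \<or> x \<notin> inputs S4"
  then show "witness_state a x = 0" by (auto simp: witness_state_def)
next
  fix a x show "0 \<le> witness_state a x"
    by (simp add: witness_state_def pA_nonneg pB_nonneg fX_nonneg gY_nonneg)
next
  fix x assume "x \<in> inputs S4" then show "(\<Sum>a\<in>outputs S4. witness_state a x) = 1" by (rule witness_state_norm)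
next
  fix i x x' a assume "i < length S4" "x \<in> inputs S4" "x' \<in> inputs S4"
    "\<forall>j<length S4. j \<noteq> i \<longrightarrow> x!j = x'!j" "a \<in> outputs S4"
  then show "(\<Sum>c<snd (S4 ! i). witness_state (a[i := c]) x) = (\<Sum>c<snd (S4 ! i). witness_state (a[i := c]) x')"
    by (rule witness_state_no_signalling)
qed

definition sX :: "nat \<Rightarrow> nat \<Rightarrow> real" where "sX x0 a0 = (\<Sum>B<Suc NB. pB B * fX a0 x0 B)"
definition sY :: "nat \<Rightarrow> nat \<Rightarrow> nat \<Rightarrow> real" where "sY B y a2 = (\<Sum>A<Suc NA. pA A * gY a2 y A B)"

lemma sX_eq: "sX x0 a0 = (1 - sB) * fX a0 x0 0 + sB * fX a0 x0 1"
proof -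
  have "sX x0 a0 = pB 0 * fX a0 x0 0 + (\<Sum>B<NB. pB (Suc B) * fX a0 x0 (Suc B))"
    unfolding sX_def by (rule sum.lessThan_Suc_shift)
  also have "(\<Sum>B<NB. pB (Suc B) * fX a0 x0 (Suc B)) = (\<Sum>B<NB. sB / NB * fX a0 x0 1)"
    by (intro sum.cong refl) (simp add: pB_def fX_def bit_def)
  also have "\<dots> = sB * fX a0 x0 1" using NB by simp
  finally show ?thesis by (simp add: pB_def)
qed

lemma sY_eq: "sY B y a2 = (1 - sA) * gY a2 y 0 B + sA * gY a2 y 1 B"
proof -
  have "sY B y a2 = pA 0 * gY a2 y 0 B + (\<Sum>A<NA. pA (Suc A) * gY a2 y (Suc A) B)"
    unfolding sY_def by (rule sum.lessThan_Suc_shift)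
  also have "(\<Sum>A<NA. pA (Suc A) * gY a2 y (Suc A) B) = (\<Sum>A<NA. sA / NA * gY a2 y 1 B)"
    by (intro sum.cong refl) (simp add: pA_def gY_def bit_def)
  also have "\<dots> = sA * gY a2 y 1 B" using NA by simp
  finally show ?thesis by (simp add: pA_def)
qed

lemma reduce_left_witness_state: "a0 < Suc Nv \<Longrightarrow> A < Suc NA \<Longrightarrow> x0 < 2 \<Longrightarrow> reduce_left SX SY witness_state [a0,A] [x0,0] = pA A * sX x0 a0"
proof -
  assume a: "a0 < Suc Nv" "A < Suc NA" "x0 < 2"
  have "reduce_left SX SY witness_state [a0,A] [x0,0] = (\<Sum>a2<Suc (Suc Nu). \<Sum>B<Suc NB. witness_state [a0,A,a2,B] [x0,0,0,0])"
    using a by (simp add: reduce_left_def outputs_Cons_iff inputs_Cons_iff sum_outputs_Cons numeral_2_eq_2)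
  also have "\<dots> = (\<Sum>a2<Suc (Suc Nu). \<Sum>B<Suc NB. pA A * pB B * fX a0 x0 B * gY a2 0 A B)"
    using a by (intro sum.cong refl) (simp add: witness_state_eq)
  also have "\<dots> = (\<Sum>B<Suc NB. \<Sum>a2<Suc (Suc Nu). pA A * pB B * fX a0 x0 B * gY a2 0 A B)"
    by (rule sum.swap)
  also have "\<dots> = (\<Sum>B<Suc NB. pA A * pB B * fX a0 x0 B)"
    by (intro sum.cong refl) (simp add: sum_distrib_left[symmetric] gY_sum)
  also have "\<dots> = pA A * sX x0 a0" by (simp add: sX_def sum_distrib_left mult_ac)
  finally show ?thesis .
qed

lemma reduce_right_witness_state: "a2 < Suc (Suc Nu) \<Longrightarrow> B < Suc NB \<Longrightarrow> y < 2 \<Longrightarrow> reduce_right SX SY witness_state [a2,B] [y,0] = pB B * sY B y a2"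
proof -
  assume a: "a2 < Suc (Suc Nu)" "B < Suc NB" "y < 2"
  have "reduce_right SX SY witness_state [a2,B] [y,0] = (\<Sum>a0<Suc Nv. \<Sum>A<Suc NA. witness_state [a0,A,a2,B] [0,0,y,0])"
    using a by (simp add: reduce_right_def outputs_Cons_iff inputs_Cons_iff sum_outputs_Cons numeral_2_eq_2)
  also have "\<dots> = (\<Sum>a0<Suc Nv. \<Sum>A<Suc NA. pA A * pB B * fX a0 0 B * gY a2 y A B)"
    using a by (intro sum.cong refl) (simp add: witness_state_eq)
  also have "\<dots> = (\<Sum>A<Suc NA. \<Sum>a0<Suc Nv. pA A * pB B * gY a2 y A B * fX a0 0 B)"
    by (subst sum.swap) (simp add: mult_ac)
  also have "\<dots> = (\<Sum>A<Suc NA. pA A * pB B * gY a2 y A B)"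
    by (intro sum.cong refl) (simp add: sum_distrib_left[symmetric] fX_sum)
  also have "\<dots> = pB B * sY B y a2" by (simp add: sY_def sum_distrib_left mult_ac)
  finally show ?thesis .
qed

lemma sX0: "sX 0 a0 = (if a0 = 0 then 1 - sB else sB / Nv)"
  unfolding sX_eq by (simp add: fX_def bit_def)
lemma sX1: "sX 1 a0 = (if a0 = 0 then sB else (1 - sB) / Nv)"
  unfolding sX_eq by (simp add: fX_def bit_def)
lemma sY0: "sY B 0 a2 = (if a2 = bit B then 1 - sA else if a2 < 2 then 0 else sA / Nu)"
  unfolding sY_eq using bit_cases[of B] by (auto simp: gY_def bit_def)
lemma sY1: "sY B 1 a2 = (if a2 = bit B then sA else if a2 < 2 then 0 else (1 - sA) / Nu)"
  unfolding sY_eq using bit_cases[of B] by (auto simp: gY_def bit_def)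

lemma sX_nonneg: "0 \<le> sX x0 a0" unfolding sX_def by (intro sum_nonneg mult_nonneg_nonneg pB_nonneg fX_nonneg)
lemma sY_nonneg: "0 \<le> sY B y a2" unfolding sY_def by (intro sum_nonneg mult_nonneg_nonneg pA_nonneg gY_nonneg)

lemma sX_sum: "(\<Sum>a0<Suc Nv. sX x0 a0) = 1"
proof -
  have "(\<Sum>a0<Suc Nv. sX x0 a0) = (\<Sum>B<Suc NB. pB B * (\<Sum>a0<Suc Nv. fX a0 x0 B))"
    unfolding sX_def sum_distrib_left by (rule sum.swap)
  also have "\<dots> = 1" by (simp add: fX_sum pB_sum)
  finally show ?thesis .
qed

lemma sY_sum: "(\<Sum>a2<Suc (Suc Nu). sY B y a2) = 1"
proof -
  have "(\<Sum>a2<Suc (Suc Nu). sY B y a2) = (\<Sum>A<Suc NA. pA A * (\<Sum>a2<Suc (Suc Nu). gY a2 y A B))"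
    unfolding sY_def sum_distrib_left by (rule sum.swap)
  also have "\<dots> = 1" by (simp add: gY_sum pA_sum)
  finally show ?thesis .
qed

lemma entropy_sX0: "(\<Sum>a0<Suc Nv. ent_term (sX 0 a0)) = spread_entropy sB Nv"
  unfolding sum.lessThan_Suc_shift sX0 spread_entropy_def by simp
lemma entropy_sX1: "(\<Sum>a0<Suc Nv. ent_term (sX 1 a0)) = spread_entropy (1 - sB) Nv"
  unfolding sum.lessThan_Suc_shift sX1 spread_entropy_def by simp

lemma sum_lessThan_Suc_Suc_shift: "(\<Sum>i<Suc (Suc N). f i) = f 0 + f 1 + (\<Sum>i<N. f (Suc (Suc i)) :: real)"
  by (simp add: sum.lessThan_Suc_shift add.assoc)

lemma entropy_sY0: "(\<Sum>a2<Suc (Suc Nu). ent_term (sY B 0 a2)) = spread_entropy sA Nu"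
  unfolding sum_lessThan_Suc_Suc_shift sY0 spread_entropy_def using bit_cases[of B] by auto
lemma entropy_sY1: "(\<Sum>a2<Suc (Suc Nu). ent_term (sY B 1 a2)) = spread_entropy (1 - sA) Nu"
  unfolding sum_lessThan_Suc_Suc_shift sY1 spread_entropy_def using bit_cases[of B] by auto

lemma entropy_pA: "(\<Sum>A<Suc NA. ent_term (pA A)) = spread_entropy sA NA"
  unfolding sum.lessThan_Suc_shift pA_def spread_entropy_def by simp
lemma entropy_pB: "(\<Sum>B<Suc NB. ent_term (pB B)) = spread_entropy sB NB"
  unfolding sum.lessThan_Suc_shift pB_def spread_entropy_def by simp

theorem meas_entropy_left:
  assumes sB2: "sB \<le> 1/2"
  shows "meas_entropy SX (reduce_left SX SY witness_state) = spread_entropy sA NA + spread_entropy sB Nv"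
proof -
  interpret tX: two_box 2 "Suc Nv" "Suc NA" by unfold_locales auto
  have pf: "\<forall>a<Suc Nv. \<forall>c<Suc NA. \<forall>x<2. reduce_left SX SY witness_state [a,c] [x,0] = pA c * sX x a"
    using reduce_left_witness_state by blast
  have st: "is_state SX (reduce_left SX SY witness_state)"
  proof (rule tX.is_state_S2_product[OF _ pf])
    fix a x assume "\<not> (a \<in> outputs SX \<and> x \<in> inputs SX)"
    then show "reduce_left SX SY witness_state a x = 0" unfolding reduce_left_def by auto
  qed (use pA_nonneg sX_nonneg pA_sum sX_sum in auto)
  have "meas_entropy SX (reduce_left SX SY witness_state) = (\<Sum>c<Suc NA. ent_term (pA c) + pA c * (\<Sum>a<Suc Nv. ent_term (sX 0 a)))"
  proof (rule tX.meas_entropy_S2[OF st pf])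
    show "\<forall>c<Suc NA. \<forall>x<2. (\<Sum>a<Suc Nv. ent_term (sX 0 a)) \<le> (\<Sum>a<Suc Nv. ent_term (sX x a))"
    proof (intro allI impI)
      fix c x :: nat assume "x < 2"
      then have "x = 0 \<or> x = 1" by auto
      moreover have "spread_entropy sB Nv \<le> spread_entropy (1 - sB) Nv" using spread_entropy_mono[of sB Nv] sB sB2 Nv by simp
      ultimately show "(\<Sum>a<Suc Nv. ent_term (sX 0 a)) \<le> (\<Sum>a<Suc Nv. ent_term (sX x a))"
        using entropy_sX0 entropy_sX1 by auto
    qed
  qed (use pA_nonneg sX_nonneg sX_sum in auto)
  also have "\<dots> = spread_entropy sA NA + spread_entropy sB Nv"
    by (simp add: sum.distrib sum_distrib_right[symmetric] pA_sum entropy_pA entropy_sX0)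
  finally show ?thesis .
qed

theorem meas_entropy_right:
  assumes sA2: "sA \<le> 1/2"
  shows "meas_entropy SY (reduce_right SX SY witness_state) = spread_entropy sB NB + spread_entropy sA Nu"
proof -
  interpret tY: two_box 2 "Suc (Suc Nu)" "Suc NB" by unfold_locales auto
  have pf: "\<forall>a<Suc (Suc Nu). \<forall>c<Suc NB. \<forall>x<2. reduce_right SX SY witness_state [a,c] [x,0] = pB c * sY c x a"
    using reduce_right_witness_state by blast
  have st: "is_state SY (reduce_right SX SY witness_state)"
  proof (rule tY.is_state_S2_product[OF _ pf])
    fix a x assume "\<not> (a \<in> outputs SY \<and> x \<in> inputs SY)"
    then show "reduce_right SX SY witness_state a x = 0" unfolding reduce_right_def by auto
  qed (use pB_nonneg sY_nonneg pB_sum sY_sum in auto)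
  have "meas_entropy SY (reduce_right SX SY witness_state) = (\<Sum>c<Suc NB. ent_term (pB c) + pB c * (\<Sum>a<Suc (Suc Nu). ent_term (sY c 0 a)))"
  proof (rule tY.meas_entropy_S2[OF st pf])
    show "\<forall>c<Suc NB. \<forall>x<2. (\<Sum>a<Suc (Suc Nu). ent_term (sY c 0 a)) \<le> (\<Sum>a<Suc (Suc Nu). ent_term (sY c x a))"
    proof (intro allI impI)
      fix c x :: nat assume "x < 2"
      then have "x = 0 \<or> x = 1" by auto
      moreover have "spread_entropy sA Nu \<le> spread_entropy (1 - sA) Nu" using spread_entropy_mono[of sA Nu] sA sA2 Nu by simp
      ultimately show "(\<Sum>a<Suc (Suc Nu). ent_term (sY c 0 a)) \<le> (\<Sum>a<Suc (Suc Nu). ent_term (sY c x a))"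
        using entropy_sY0 entropy_sY1 by auto
    qed
  qed (use pB_nonneg sY_nonneg sY_sum in auto)
  also have "\<dots> = spread_entropy sB NB + spread_entropy sA Nu"
    by (simp add: sum.distrib sum_distrib_right[symmetric] pB_sum entropy_pB entropy_sY0)
  finally show ?thesis .
qed

lemma entropy_pA_pB: "(\<Sum>A<Suc NA. \<Sum>B<Suc NB. ent_term (pA A * pB B)) = spread_entropy sA NA + spread_entropy sB NB"
proof -
  have "(\<Sum>A<Suc NA. \<Sum>B<Suc NB. ent_term (pA A * pB B)) = (\<Sum>A<Suc NA. \<Sum>B<Suc NB. pB B * ent_term (pA A) + pA A * ent_term (pB B))"
    by (intro sum.cong refl ent_term_mult pA_nonneg pB_nonneg)
  also have "\<dots> = (\<Sum>A<Suc NA. ent_term (pA A) * (\<Sum>B<Suc NB. pB B) + pA A * (\<Sum>B<Suc NB. ent_term (pB B)))"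
    by (simp add: sum.distrib sum_distrib_left sum_distrib_right mult_ac)
  also have "\<dots> = (\<Sum>A<Suc NA. ent_term (pA A)) + (\<Sum>A<Suc NA. pA A) * (\<Sum>B<Suc NB. ent_term (pB B))"
    by (simp add: pB_sum sum.distrib sum_distrib_right)
  also have "\<dots> = spread_entropy sA NA + spread_entropy sB NB" by (simp add: entropy_pA entropy_pB pA_sum)
  finally show ?thesis .
qed

lemma valid_sys_S4: "valid_sys S4" by (simp add: valid_sys_def)

text \<open>The joint measurement is the wiring that queries Y at bit A and then X at the bit output
  by Y; for each joint output a, wiring_input a is the input this wiring would have used.\<close>

definition wiring_input :: "nat list \<Rightarrow> nat list" where
  "wiring_input a = [if a!2 = 1 then 1 else 0, 0, bit (a!1), 0]"

definition wiring_coords :: "(nat list \<times> nat list) set" where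
  "wiring_coords = (\<lambda>a. (a, wiring_input a)) ` outputs S4"

lemma wiring_input_in_inputs: "wiring_input a \<in> inputs S4"
  by (simp add: wiring_input_def inputs_Cons_iff)

lemma valid_strategy_S4: "valid_strategy S4 \<alpha> \<Longrightarrow> (\<forall>y<2. \<alpha> 0 y < Suc Nv) \<and> \<alpha> (Suc 0) 0 < Suc NA \<and> (\<forall>y<2. \<alpha> 2 y < Suc (Suc Nu)) \<and> \<alpha> 3 0 < Suc NB"
proof -
  assume va: "valid_strategy S4 \<alpha>"
  have h: "\<And>i y. i < 4 \<Longrightarrow> y < fst (S4!i) \<Longrightarrow> \<alpha> i y < snd (S4!i)" using va by (simp add: valid_strategy_def)
  have "\<forall>y<2. \<alpha> 0 y < Suc Nv" using h[of 0] by simp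
  moreover have "\<alpha> (Suc 0) 0 < Suc NA" using h[of "Suc 0" 0] by simp
  moreover have "\<forall>y<2. \<alpha> 2 y < Suc (Suc Nu)" using h[of 2] by simp
  moreover have "\<alpha> 3 0 < Suc NB" using h[of 3 0] by (simp add: numeral_3_eq_3)
  ultimately show ?thesis by blast
qed

lemma maximally_informative_wiring_coords: "maximally_informative S4 (to_nat ` wiring_coords) coord_meas"
proof (rule maximally_informative_coord_meas[OF valid_sys_S4])
  show "finite wiring_coords" by (simp add: wiring_coords_def)
  show "wiring_coords \<subseteq> outputs S4 \<times> inputs S4" using wiring_input_in_inputs by (auto simp: wiring_coords_def)
  show "\<forall>\<alpha>. valid_strategy S4 \<alpha> \<longrightarrow> card {k \<in> wiring_coords. fst k = det_output \<alpha> (snd k)} = 1"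
  proof (intro allI impI)
    fix \<alpha> assume va: "valid_strategy S4 \<alpha>"
    note v = valid_strategy_S4[OF va]
    define a2 where "a2 = \<alpha> 2 (bit (\<alpha> 1 0))"
    define astar where "astar = [\<alpha> 0 (if a2 = 1 then 1 else 0), \<alpha> 1 0, a2, \<alpha> 3 0]"
    have "{k \<in> wiring_coords. fst k = det_output \<alpha> (snd k)} = {(astar, wiring_input astar)}"
    proof (intro set_eqI iffI)
      fix k assume "k \<in> {k \<in> wiring_coords. fst k = det_output \<alpha> (snd k)}"
      then obtain a where a: "a \<in> outputs S4" and k: "k = (a, wiring_input a)" and eq: "a = det_output \<alpha> (wiring_input a)"
        by (auto simp: wiring_coords_def)
      have eq2: "a = [\<alpha> 0 (if a!2 = 1 then 1 else 0), \<alpha> 1 0, \<alpha> 2 (bit (a!1)), \<alpha> 3 0]"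
        using eq by (simp add: wiring_input_def det_output_Cons4)
      then have "a!1 = \<alpha> 1 0" by (metis nth_Cons_0 nth_Cons_Suc One_nat_def)
      then have "a!2 = a2" using eq2 unfolding a2_def by (metis nth_Cons_0 nth_Cons_Suc numeral_2_eq_2)
      then have "a = astar" using eq2 \<open>a!1 = \<alpha> 1 0\<close> unfolding astar_def by simp
      then show "k \<in> {(astar, wiring_input astar)}" using k by simp
    next
      fix k assume "k \<in> {(astar, wiring_input astar)}"
      then have k: "k = (astar, wiring_input astar)" by simp
      have ao: "astar \<in> outputs S4" using v by (auto simp: astar_def a2_def outputs_Cons_iff bit_def)
      have "astar = det_output \<alpha> (wiring_input astar)" by (simp add: astar_def wiring_input_def det_output_Cons4 a2_def)
      then show "k \<in> {k \<in> wiring_coords. fst k = det_output \<alpha> (snd k)}" using k ao by (auto simp: wiring_coords_def)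
    qed
    then show "card {k \<in> wiring_coords. fst k = det_output \<alpha> (snd k)} = 1" by simp
  qed
qed

lemma wiring_coords_entropy: "(\<Sum>r\<in>to_nat ` wiring_coords. ent_term (lin_apply S4 (coord_meas r) witness_state)) = spread_entropy sA NA + spread_entropy sB NB"
proof -
  have inj: "inj_on to_nat wiring_coords" by (meson inj_on_subset inj_to_nat subset_UNIV)
  have inj2: "inj_on (\<lambda>a. (a, wiring_input a)) (outputs S4)" by (auto simp: inj_on_def)
  have "(\<Sum>r\<in>to_nat ` wiring_coords. ent_term (lin_apply S4 (coord_meas r) witness_state)) = (\<Sum>k\<in>wiring_coords. ent_term (lin_apply S4 (coord_meas (to_nat k)) witness_state))"
    by (rule sum.reindex[OF inj, unfolded comp_def])
  also have "\<dots> = (\<Sum>a\<in>outputs S4. ent_term (lin_apply S4 (coord_meas (to_nat (a, wiring_input a))) witness_state))"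
    unfolding wiring_coords_def by (rule sum.reindex[OF inj2, unfolded comp_def])
  also have "\<dots> = (\<Sum>a\<in>outputs S4. ent_term (witness_state a (wiring_input a)))"
    using wiring_input_in_inputs by (intro sum.cong refl) (simp add: coord_meas_to_nat lin_apply_coord_effect)
  also have "\<dots> = (\<Sum>a0<Suc Nv. \<Sum>A<Suc NA. \<Sum>a2<Suc (Suc Nu). \<Sum>B<Suc NB.
       (if a0 = 0 \<and> a2 = bit B then ent_term (pA A * pB B) else 0))"
    unfolding sum_outputs_S4
  proof (intro sum.cong refl)
    fix a0 A a2 B assume a: "a0 \<in> {..<Suc Nv}" "A \<in> {..<Suc NA}" "a2 \<in> {..<Suc (Suc Nu)}" "B \<in> {..<Suc NB}"
    have "witness_state [a0,A,a2,B] (wiring_input [a0,A,a2,B]) = pA A * pB B * fX a0 (if a2 = 1 then 1 else 0) B * gY a2 (bit A) A B"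
      using a by (simp add: wiring_input_def witness_state_eq)
    also have "\<dots> = (if a0 = 0 \<and> a2 = bit B then pA A * pB B else 0)"
      using bit_cases[of B] by (auto simp: fX_def gY_def)
    finally show "ent_term (witness_state [a0,A,a2,B] (wiring_input [a0,A,a2,B])) = (if a0 = 0 \<and> a2 = bit B then ent_term (pA A * pB B) else 0)"
      by simp
  qed
  also have "\<dots> = (\<Sum>A<Suc NA. \<Sum>B<Suc NB. \<Sum>a0<Suc Nv. \<Sum>a2<Suc (Suc Nu).
       (if a0 = 0 \<and> a2 = bit B then ent_term (pA A * pB B) else 0))"
    by (rule sum_swap_4)
  also have "\<dots> = (\<Sum>A<Suc NA. \<Sum>B<Suc NB. ent_term (pA A * pB B))"
  proof (intro sum.cong refl)
    fix A B
    have "bit B < Suc (Suc Nu)" using bit_less_2[of B] by linarith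
    then have i: "(\<Sum>a2<Suc (Suc Nu). (if a0 = 0 \<and> a2 = bit B then ent_term (pA A * pB B) else 0)) = (if a0 = 0 then ent_term (pA A * pB B) else 0)" for a0
      by (cases "a0 = 0") (simp_all add: sum.delta')
    show "(\<Sum>a0<Suc Nv. \<Sum>a2<Suc (Suc Nu). (if a0 = 0 \<and> a2 = bit B then ent_term (pA A * pB B) else 0)) = ent_term (pA A * pB B)"
      unfolding i by (simp add: sum.delta)
  qed
  also have "\<dots> = spread_entropy sA NA + spread_entropy sB NB" by (rule entropy_pA_pB)
  finally show ?thesis .
qed

lemma replicate_S4: "replicate (length S4) (0::nat) = [0,0,0,0]" by (simp add: numeral_eq_Suc)

lemma outputs_at_S4: "outputs_at [Suc 0, 3] [a0,a1,a2,a3] = [a1,a3]"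
  by (simp add: outputs_at_def numeral_3_eq_3)

lemma class_prob_S4: "A < Suc NA \<Longrightarrow> B < Suc NB \<Longrightarrow> class_prob S4 [Suc 0, 3] witness_state [A,B] = pA A * pB B"
proof -
  assume AB: "A < Suc NA" "B < Suc NB"
  have "class_prob S4 [Suc 0, 3] witness_state [A,B] = (\<Sum>a0<Suc Nv. \<Sum>a1<Suc NA. \<Sum>a2<Suc (Suc Nu). \<Sum>a3<Suc NB.
      (if a1 = A \<and> a3 = B then witness_state [a0,a1,a2,a3] [0,0,0,0] else 0))"
    unfolding class_prob_def sum_outputs_S4 replicate_S4 by (simp add: restrict_class_def outputs_at_S4)
  also have "\<dots> = (\<Sum>a1<Suc NA. \<Sum>a3<Suc NB. \<Sum>a0<Suc Nv. \<Sum>a2<Suc (Suc Nu).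
      (if a1 = A \<and> a3 = B then witness_state [a0,a1,a2,a3] [0,0,0,0] else 0))"
    by (rule sum_swap_4)
  also have "\<dots> = (\<Sum>a1<Suc NA. \<Sum>a3<Suc NB. (if a1 = A \<and> a3 = B then (\<Sum>a0<Suc Nv. \<Sum>a2<Suc (Suc Nu). witness_state [a0,a1,a2,a3] [0,0,0,0]) else 0))"
    by (intro sum.cong refl) auto
  also have "\<dots> = (\<Sum>a0<Suc Nv. \<Sum>a2<Suc (Suc Nu). witness_state [a0,A,a2,B] [0,0,0,0])"
  proof -
    have "(\<Sum>a3<Suc NB. (if a1 = A \<and> a3 = B then (\<Sum>a0<Suc Nv. \<Sum>a2<Suc (Suc Nu). witness_state [a0,a1,a2,a3] [0,0,0,0]) else 0))
        = (if a1 = A then (\<Sum>a0<Suc Nv. \<Sum>a2<Suc (Suc Nu). witness_state [a0,a1,a2,B] [0,0,0,0]) else 0)" for a1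
      using AB by (cases "a1 = A") (simp_all add: sum.delta')
    then show ?thesis using AB by (simp add: sum.delta')
  qed
  also have "\<dots> = (\<Sum>a0<Suc Nv. \<Sum>a2<Suc (Suc Nu). pA A * pB B * (fX a0 0 B * gY a2 0 A B))"
    using AB by (intro sum.cong refl) (simp add: witness_state_eq mult_ac)
  also have "\<dots> = pA A * pB B * ((\<Sum>a0<Suc Nv. fX a0 0 B) * (\<Sum>a2<Suc (Suc Nu). gY a2 0 A B))"
  proof -
    have "pA A * pB B * ((\<Sum>a0<Suc Nv. fX a0 0 B) * (\<Sum>a2<Suc (Suc Nu). gY a2 0 A B))
        = pA A * pB B * (\<Sum>a0<Suc Nv. \<Sum>a2<Suc (Suc Nu). fX a0 0 B * gY a2 0 A B)"
      by (simp only: sum_product)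
    also have "\<dots> = (\<Sum>a0<Suc Nv. \<Sum>a2<Suc (Suc Nu). pA A * pB B * (fX a0 0 B * gY a2 0 A B))"
      by (simp only: sum_distrib_left)
    finally show ?thesis by simp
  qed
  also have "\<dots> = pA A * pB B" by (simp add: fX_sum gY_sum)
  finally show ?thesis .
qed

sublocale classical_AB: classical_boxes S4 "[Suc 0, 3]"
  by unfold_locales (simp_all add: valid_sys_S4)

lemma classes_S4: "classical_AB.classes = (\<lambda>(A,B). [A,B]) ` ({..<Suc NA} \<times> {..<Suc NB})"
proof (intro set_eqI iffI)
  fix c assume "c \<in> classical_AB.classes"
  then obtain a where a: "a \<in> outputs S4" and c: "c = outputs_at [Suc 0, 3] a" by (auto simp: classical_AB.classes_def)
  then obtain a0 a1 a2 a3 where "a = [a0,a1,a2,a3]" "a1 < Suc NA" "a3 < Suc NB" using outputs_S4_iff by blast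
  then show "c \<in> (\<lambda>(A,B). [A,B]) ` ({..<Suc NA} \<times> {..<Suc NB})" using c by (auto simp: outputs_at_S4)
next
  fix c assume "c \<in> (\<lambda>(A,B). [A,B]) ` ({..<Suc NA} \<times> {..<Suc NB})"
  then obtain A B where AB: "A < Suc NA" "B < Suc NB" "c = [A,B]" by auto
  have "[0,A,0,B] \<in> outputs S4" using AB by (simp add: outputs_Cons_iff)
  moreover have "c = outputs_at [Suc 0, 3] [0,A,0,B]" using AB by (simp add: outputs_at_S4)
  ultimately show "c \<in> classical_AB.classes" by (auto simp: classical_AB.classes_def)
qed

lemma class_entropy_S4:
  "(\<Sum>c\<in>classical_AB.classes. ent_term (class_prob S4 [Suc 0, 3] witness_state c)) = spread_entropy sA NA + spread_entropy sB NB"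
proof -
  have inj: "inj_on (\<lambda>(A,B). [A::nat,B]) X" for X by (auto simp: inj_on_def)
  have "(\<Sum>c\<in>classical_AB.classes. ent_term (class_prob S4 [Suc 0, 3] witness_state c))
      = (\<Sum>A<Suc NA. \<Sum>B<Suc NB. ent_term (pA A * pB B))"
    unfolding classes_S4 by (simp add: sum.reindex[OF inj] sum.cartesian_product' class_prob_S4)
  also have "\<dots> = spread_entropy sA NA + spread_entropy sB NB" by (rule entropy_pA_pB)
  finally show ?thesis .
qed

theorem meas_entropy_joint: "meas_entropy S4 witness_state = spread_entropy sA NA + spread_entropy sB NB"
proof (rule antisym)
  show "meas_entropy S4 witness_state \<le> spread_entropy sA NA + spread_entropy sB NB"
    using meas_entropy_le[OF is_state_witness_state maximally_informative_wiring_coords] wiring_coords_entropy by simp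
  show "spread_entropy sA NA + spread_entropy sB NB \<le> meas_entropy S4 witness_state"
    using classical_AB.class_entropy_le_meas[OF _ is_state_witness_state] class_entropy_S4
    by (intro meas_entropy_ge[OF maximally_informative_wiring_coords]) simp
qed

end

section \<open>Approximating the cone\<close>

definition entropy_vectors :: "(real \<times> real \<times> real) set" where
  "entropy_vectors = {(meas_entropy SX (reduce_left SX SY p),
                  meas_entropy SY (reduce_right SX SY p),
                  meas_entropy (SX @ SY) p) | SX SY p.
                 valid_sys SX \<and> valid_sys SY \<and> SX \<noteq> [] \<and> SY \<noteq> [] \<and> is_state (SX @ SY) p}"

context witness begin

lemma witness_entropy_vector:
  assumes "sA \<le> 1/2" "sB \<le> 1/2"
  shows "(spread_entropy sA NA + spread_entropy sB Nv, spread_entropy sB NB + spread_entropy sA Nu, spread_entropy sA NA + spread_entropy sB NB) \<in> entropy_vectors"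
proof -
  have "valid_sys SX" "valid_sys SY" by (simp_all add: valid_sys_def)
  moreover have "is_state (SX @ SY) witness_state" using is_state_witness_state by simp
  moreover have "meas_entropy (SX @ SY) witness_state = spread_entropy sA NA + spread_entropy sB NB" using meas_entropy_joint by simp
  ultimately show ?thesis unfolding entropy_vectors_def using meas_entropy_left[OF assms(2)] meas_entropy_right[OF assms(1)]
    by (intro CollectI exI[of _ SX] exI[of _ SY] exI[of _ witness_state]) auto
qed

end

text \<open>The target (x, y, z) is split as z = a + b with a : b = x : y; then the witness states with
  s_A = a/j, s_B = b/j, N_A = N_B = 2^j, N_v = 2^(j (x - a)/b) and N_u = 2^(j (y - b)/a)
  have entropy vectors tending to (a + (x - a), b + (y - b), a + b).\<close>

lemma positive_point_in_closure:
  assumes x: "0 < x" and y: "0 < y" and z: "0 < z" and zxy: "z < x + y"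
  shows "(x, y, z) \<in> closure entropy_vectors"
proof -
  define a where "a = z * x / (x + y)"
  define b where "b = z * y / (x + y)"
  have a0: "0 < a" and b0: "0 < b" using x y z by (simp_all add: a_def b_def)
  have "x * z < x * (x + y)" "y * z < y * (x + y)" using zxy x y by simp_all
  then have "a < x" "b < y" using x y by (simp_all add: a_def b_def field_simps)
  have "a + b = z * (x + y) / (x + y)" by (simp add: a_def b_def add_divide_distrib[symmetric] ring_distribs)
  then have abz: "a + b = z" using x y by simp
  define k where "k c j = nat \<lceil>real j * c\<rceil>" for c :: real and j :: nat
  define E where "E t c j = spread_entropy (t / real j) (2 ^ k c j)" for t c :: real and j :: nat
  define V where "V j = (E a 1 j + E b ((x - a) / b) j, E b 1 j + E a ((y - b) / a) j, E a 1 j + E b 1 j)" for j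
  obtain N :: nat where N: "2 * (a + b) < real N" using reals_Archimedean2 by blast
  have "V (j + N) \<in> entropy_vectors" for j
  proof -
    have "2 * a \<le> real (j + N) \<and> 2 * b \<le> real (j + N)" using N a0 b0 by simp
    then have s: "a / real (j + N) \<le> 1/2" "b / real (j + N) \<le> 1/2" "0 \<le> a / real (j + N)" "0 \<le> b / real (j + N)"
      using a0 b0 by (auto simp: field_simps)
    interpret witness "2 ^ (j + N)" "2 ^ (j + N)" "2 ^ k ((y - b) / a) (j + N)" "2 ^ k ((x - a) / b) (j + N)"
      "a / real (j + N)" "b / real (j + N)"
    proof unfold_locales
      show "a / real (j + N) \<le> 1" "b / real (j + N) \<le> 1" using s by linarith+
    qed (use s in simp_all)
    have "k 1 (j + N) = j + N" unfolding k_def by (metis mult_1_right ceiling_of_nat nat_int)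
    then show ?thesis using witness_entropy_vector[OF s(1,2)] by (simp add: V_def E_def)
  qed
  moreover have "V \<longlonglongrightarrow> (a * 1 + b * ((x - a) / b), b * 1 + a * ((y - b) / a), a * 1 + b * 1)"
    unfolding V_def E_def k_def using a0 b0 \<open>a < x\<close> \<open>b < y\<close>
    by (intro tendsto_Pair tendsto_add spread_entropy_scaled_tendsto) auto
  then have "(\<lambda>j. V (j + N)) \<longlonglongrightarrow> (x, y, z)"
    using a0 b0 abz by (simp add: LIMSEQ_ignore_initial_segment)
  ultimately show ?thesis unfolding closure_sequential by (intro exI[of _ "\<lambda>j. V (j + N)"]) simp
qed

theorem theorem7:
  shows "{(x::real, y::real, z::real). 0 \<le> x \<and> 0 \<le> y \<and> 0 \<le> z \<and> z \<le> x + y}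
    \<subseteq> closure {(meas_entropy SX (reduce_left SX SY p),
                  meas_entropy SY (reduce_right SX SY p),
                  meas_entropy (SX @ SY) p) | SX SY p.
                 valid_sys SX \<and> valid_sys SY \<and> SX \<noteq> [] \<and> SY \<noteq> [] \<and> is_state (SX @ SY) p}"
proof (clarify, fold entropy_vectors_def)
  fix x y z :: real assume "0 \<le> x" "0 \<le> y" "0 \<le> z" "z \<le> x + y"
  define e where "e n = 1 / real (Suc n)" for n
  have "(x + e n, y + e n, z + e n) \<in> closure entropy_vectors" for n
  proof -
    have "0 < e n" by (simp add: e_def)
    then show ?thesis using \<open>0 \<le> x\<close> \<open>0 \<le> y\<close> \<open>0 \<le> z\<close> \<open>z \<le> x + y\<close>
      by (intro positive_point_in_closure) linarith+
  qed
  moreover have "(\<lambda>n. (x + e n, y + e n, z + e n)) \<longlonglongrightarrow> (x, y, z)"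
    using tendsto_add[OF tendsto_const LIMSEQ_Suc[OF lim_inverse_n']] unfolding e_def
    by (intro tendsto_Pair) (simp_all add: inverse_eq_divide)
  ultimately show "(x, y, z) \<in> closure entropy_vectors"
    by (rule closed_sequentially[OF closed_closure])
qed

end
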